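(* Let $\Omega\subset\subset\mathbb{C}^n$ be a bounded domain satisfying the $(C,\alpha,r)$-cusp condition, where $C>0$, $0<\alpha<1$, $r>0$. Put \[ A:=\frac{\pi C^{1/\alpha}}{2(1/\alpha-1)}. \] Then for every negative plurisubharmonic function $\rho$ on $\Omega$ there exist constants $c>0$ and $\delta_0>0$ such that \[ \rho(z)\le -c\,\exp\!\left(-\frac{A}{\delta_\Omega(z)^{1/\alpha-1}}\right)\quad\text{for all } z\in\Omega \text{ with } \delta_\Omega(z)<\delta_0, \] where $\delta_\Omega(z)$ denotes the Euclidean distance from $z$ to $\partial\Omega$.
   Context: For a unit vector $v\in\mathbb{C}^n$, let $\langle z,w\rangle=\sum_k z_k\overline{w_k}$ and let $\pi_v$ be the orthogonal projection of $\mathbb{C}^n=\mathbb{R}^{2n}$ onto the real hyperplane $\{w:\mathrm{Re}\langle w,v\rangle=0\}$. For $p\in\mathbb{C}^n$, the $(C,\alpha)$-cusp with axis $v$ and vertex $p$ is $\Gamma(p,v,C,\alpha):=\{z\in\mathbb{C}^n:\ \mathrm{Re}\langle z-p,v\rangle>C|\pi_v(z-p)|^\alpha\}$; its axis is the ray $\{p+tv: t>0\}$. A bounded domain $\Omega\subset\mathbb{C}^n$ satisfies the $(C,\alpha,r)$-cusp condition if every $z\in\Omega$ sufficiently close to $\partial\Omega$ lies on the axis of some cusp $\Gamma(p,v,C,\alpha)$ with (1) $p\in\partial\Omega$; (2) $\Gamma(p,v,C,\alpha)\cap B_r(p)\subset\Omega$, where $B_r(p)$ is the open ball of center $p$ and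 radius $r$; (3) $|z-p|<r/2$. *)

theory Defs
  imports "HOL-Analysis.Analysis"
begin

text \<open>Points of C^n are modelled as vectors of type complex^'n ('n finite, n = CARD('n) >= 1);
  the norm on complex^'n is the Euclidean norm of R^{2n}.\<close>

definition cinner :: "complex^'n \<Rightarrow> complex^'n \<Rightarrow> complex" where
  "cinner z w = (\<Sum>k\<in>UNIV. z $ k * cnj (w $ k))"

text \<open>Orthogonal projection of R^{2n} onto the real hyperplane {w. Re <w,v> = 0} (v a unit vector).\<close>
definition proj_hyp :: "complex^'n \<Rightarrow> complex^'n \<Rightarrow> complex^'n" where
  "proj_hyp v w = w - (Re (cinner w v)) *\<^sub>R v"

definition cusp :: "complex^'n \<Rightarrow> complex^'n \<Rightarrow> real \<Rightarrow> real \<Rightarrow> (complex^'n) set" where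
  "cusp p v C \<alpha> = {z. Re (cinner (z - p) v) > C * norm (proj_hyp v (z - p)) powr \<alpha>}"

definition cusp_condition :: "(complex^'n) set \<Rightarrow> real \<Rightarrow> real \<Rightarrow> real \<Rightarrow> bool" where
  "cusp_condition \<Omega> C \<alpha> r \<longleftrightarrow>
     (\<exists>\<epsilon>>0. \<forall>z\<in>\<Omega>. infdist z (frontier \<Omega>) < \<epsilon> \<longrightarrow>
        (\<exists>p v. p \<in> frontier \<Omega> \<and> norm v = 1 \<and> (\<exists>t>0. z = p + t *\<^sub>R v) \<and>
               cusp p v C \<alpha> \<inter> ball p r \<subseteq> \<Omega> \<and> norm (z - p) < r / 2))"

definition usc_on :: "(complex^'n) set \<Rightarrow> (complex^'n \<Rightarrow> real) \<Rightarrow> bool" where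
  "usc_on \<Omega> u \<longleftrightarrow> (\<forall>t. openin (top_of_set \<Omega>) {z\<in>\<Omega>. u z < t})"

text \<open>Plurisubharmonic (Klimek's definition): upper semicontinuous, and the sub-mean-value
  inequality holds on every closed complex disc {a + \<zeta> b : |\<zeta>| \<le> 1} contained in \<Omega>.
  (For real-valued u the integral must be finite, i.e. the function integrable.)\<close>
definition psh :: "(complex^'n) set \<Rightarrow> (complex^'n \<Rightarrow> real) \<Rightarrow> bool" where
  "psh \<Omega> u \<longleftrightarrow> usc_on \<Omega> u \<and>
     (\<forall>a\<in>\<Omega>. \<forall>b. (\<forall>\<zeta>::complex. norm \<zeta> \<le> 1 \<longrightarrow> a + \<zeta> *s b \<in> \<Omega>) \<longrightarrow>
        set_integrable lborel {0..2*pi} (\<lambda>\<theta>. u (a + cis \<theta> *s b)) \<and>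
        u a \<le> (1 / (2*pi)) * (LINT \<theta>:{0..2*pi}|lborel. u (a + cis \<theta> *s b)))"

end

theory Submission
  imports Defs "HOL-Complex_Analysis.Complex_Analysis"
begin

text \<open>Restrict \<rho> to the complex line through the vertex p of a cusp in the direction of its
  axis v. In the coordinate \<zeta> with z = p + \<zeta> v the cusp contains the planar cusp
  D = {0 < Re \<zeta> < x1, C |Im \<zeta>| powr \<alpha> < Re \<zeta>}, on which \<rho> is subharmonic. With
  \<beta> = 1/\<alpha> - 1 the harmonic function u = Re exp (-A \<zeta> powr (-\<beta>) + B \<zeta> powr \<beta>) tends to 0
  at the vertex, is non-positive near the curved sides of D (its phase lies in [\<pi>/2, 3\<pi>/2]
  there) and is at least exp (-A t powr (-\<beta>)) on the axis. On the remaining part of the boundary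
  \<rho> is bounded away from 0, because points there keep a fixed distance from the frontier of \<Omega>.
  The maximum principle gives \<rho> \<le> -c u on D, hence \<rho> (p + t v) \<le> -c exp (-A t powr (-\<beta>)),
  while the distance of p + t v to the frontier is at most t.\<close>

lemma cos_ge_one_minus_sq_half: "1 - x^2 / 2 \<le> cos (x::real)"
proof -
  have "cos x = 1 - 2 * sin (x/2)^2"
    using cos_double_sin[of "x/2"] by simp
  moreover have "sin (x/2)^2 \<le> (x/2)^2"
    using abs_sin_x_le_abs_x[of "x/2"] by (metis abs_le_square_iff)
  ultimately show ?thesis by (simp add: power_divide)
qed

lemma sin_ge_sub_cube_div_six:
  assumes "0 \<le> (x::real)" shows "x - x ^ 3 / 6 \<le> sin x"
proof -
  let ?h = "\<lambda>t::real. sin t - t + t ^ 3 / 6"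
  have "?h 0 \<le> ?h x"
  proof (rule DERIV_nonneg_imp_nondecreasing[OF assms])
    fix t :: real
    have "DERIV ?h t :> cos t - 1 + t^2 / 2"
      by (auto intro!: derivative_eq_intros simp: power2_eq_square)
    moreover have "0 \<le> cos t - 1 + t^2 / 2"
      using cos_ge_one_minus_sq_half[of t] by simp
    ultimately show "\<exists>y. DERIV ?h t :> y \<and> 0 \<le> y" by blast
  qed
  thus ?thesis by simp
qed

lemma cos_nonpos_between:
  assumes "pi/2 \<le> (x::real)" "x \<le> 3*pi/2" shows "cos x \<le> 0"
proof -
  have "cos x = - sin (x - pi/2)" by (simp add: sin_diff)
  moreover have "0 \<le> sin (x - pi/2)" using assms by (intro sin_ge_zero) auto
  ultimately show ?thesis by simp
qed

lemma powr_neg_ge_one_minus: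
  assumes "0 \<le> (t::real)" "0 \<le> g" shows "1 - g * t \<le> (1 + t) powr (-g)"
proof -
  have "1 - g * ln (1 + t) \<le> exp (-g * ln (1 + t))"
    using exp_ge_add_one_self[of "-g * ln (1 + t)"] by simp
  moreover have "g * ln (1 + t) \<le> g * t"
    using assms by (intro mult_left_mono ln_add_one_self_le_self) auto
  ultimately show ?thesis using assms by (simp add: powr_def)
qed

lemma prod_one_minus_ge:
  fixes a b c :: real
  assumes "0 \<le> a" "a \<le> 1" "0 \<le> b" "b \<le> 1" "0 \<le> c" "c \<le> 1"
  shows "1 - a - b - c \<le> (1 - a) * (1 - b) * (1 - c)"
proof -
  have "1 - a - b \<le> (1 - a) * (1 - b)" using assms by (simp add: algebra_simps)
  moreover have "(1 - a) * (1 - b) * c \<le> c"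
    using assms by (simp add: mult_le_one mult_left_le_one_le)
  ultimately show ?thesis by (simp add: algebra_simps)
qed

lemma sqrt_sum_squares_powr:
  assumes "0 < (x::real)"
  shows "sqrt (x^2 + y^2) powr p = x powr p * (1 + (y/x)^2) powr (p/2)"
proof -
  have "x^2 + y^2 = x^2 * (1 + (y/x)^2)" using assms by (simp add: field_simps)
  hence "sqrt (x^2 + y^2) = x * sqrt (1 + (y/x)^2)" using assms by (simp add: real_sqrt_mult)
  hence "sqrt (x^2 + y^2) powr p = x powr p * sqrt (1 + (y/x)^2) powr p"
    using assms by (simp add: powr_mult)
  also have "sqrt (1 + (y/x)^2) powr p = (1 + (y/x)^2) powr (p/2)"
    by (simp add: powr_half_sqrt[symmetric] powr_powr)
  finally show ?thesis .
qed

lemma sin_mult_arctan_bounds: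
  fixes \<beta> s :: real
  assumes "0 \<le> s" "0 \<le> \<beta>" "\<beta> * s \<le> 1"
  shows "sin (\<beta> * arctan s) \<le> \<beta> * s"
    and "\<beta> * s / sqrt (1 + s^2) * (1 - (\<beta> * s)^2 / 6) \<le> sin (\<beta> * arctan s)"
proof -
  define \<phi> where "\<phi> = arctan s"
  have \<phi>: "0 \<le> \<phi>" "\<phi> \<le> s" using assms(1) by (simp_all add: \<phi>_def arctan_le_self)
  have \<beta>\<phi>: "0 \<le> \<beta> * \<phi>" "\<beta> * \<phi> \<le> \<beta> * s" using assms(2) \<phi> by (simp_all add: mult_left_mono)
  show "sin (\<beta> * arctan s) \<le> \<beta> * s"
    using sin_x_le_x[OF \<beta>\<phi>(1)] \<beta>\<phi>(2) by (simp add: \<phi>_def)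
  have "s / sqrt (1 + s^2) \<le> \<phi>"
    using sin_x_le_x[OF \<phi>(1)] by (simp add: \<phi>_def sin_arctan)
  hence "\<beta> * s / sqrt (1 + s^2) \<le> \<beta> * \<phi>"
    using assms(2) by (metis mult_left_mono times_divide_eq_right)
  moreover have "(\<beta> * \<phi>)^2 \<le> (\<beta> * s)^2" using \<beta>\<phi> by (intro power_mono) auto
  moreover have "(\<beta> * s)^2 \<le> 1"
    using assms by (simp add: power_le_one)
  ultimately have "\<beta> * s / sqrt (1 + s^2) * (1 - (\<beta> * s)^2 / 6) \<le> (\<beta> * \<phi>) * (1 - (\<beta> * \<phi>)^2 / 6)"
    using \<beta>\<phi>(1) by (intro mult_mono[of "\<beta> * s / sqrt (1 + s^2)"]) auto
  also have "\<dots> \<le> sin (\<beta> * \<phi>)"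
    using sin_ge_sub_cube_div_six[OF \<beta>\<phi>(1)]
    by (simp add: power2_eq_square power3_eq_cube algebra_simps)
  finally show "\<beta> * s / sqrt (1 + s^2) * (1 - (\<beta> * s)^2 / 6) \<le> sin (\<beta> * arctan s)"
    by (simp add: \<phi>_def)
qed


text \<open>The phase estimates behind the barrier: \<beta> stands for 1/\<alpha> - 1, \<sigma> for the slope of the
  cusp boundary at the current abscissa and s for the slope of the point itself, which lies in the
  thin band (1 - \<sigma>^2) \<sigma> \<le> s \<le> \<sigma> next to the boundary.\<close>

lemma band_slope_bounds:
  fixes \<sigma> s :: real
  assumes "0 < \<sigma>" "\<sigma> \<le> 1/2" "(1 - \<sigma>^2) * \<sigma> \<le> s"
  shows "\<sigma>^2 \<le> 1/4" "\<sigma> / 2 \<le> s" "0 \<le> s"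
proof -
  show \<sigma>sq: "\<sigma>^2 \<le> 1/4" using power_mono[OF assms(2), of 2] assms(1) by (simp add: power_divide)
  have "\<sigma> / 2 \<le> (1 - \<sigma>^2) * \<sigma>" using mult_right_mono[of "1/2" "1 - \<sigma>^2" \<sigma>] \<sigma>sq assms(1) by simp
  thus "\<sigma> / 2 \<le> s" using assms(3) by linarith
  thus "0 \<le> s" using assms(1) by simp
qed

lemma band_factors_lower_bound:
  fixes \<beta> \<sigma> s :: real
  assumes \<beta>: "0 < \<beta>" and \<sigma>: "0 < \<sigma>" "\<sigma> \<le> 1/2" "\<beta> * \<sigma> \<le> 1" "\<sigma>^2 * (1 + \<beta>) / 2 \<le> 1"
    and s: "(1 - \<sigma>^2) * \<sigma> \<le> s" "s \<le> \<sigma>"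
  shows "1 - (1 + (1 + \<beta>)/2 + \<beta>^2/6) * \<sigma>^2
    \<le> (s / \<sigma>) * (1 + s^2) powr (-((1 + \<beta>)/2)) * (1 - (\<beta> * s)^2 / 6)"
proof -
  note \<sigma>sq = band_slope_bounds(1)[OF \<sigma>(1,2) s(1)] and s0 = band_slope_bounds(3)[OF \<sigma>(1,2) s(1)]
  have "s^2 \<le> \<sigma>^2" using s0 s(2) by (intro power_mono) auto
  hence "(1 + \<beta>)/2 * s^2 \<le> \<sigma>^2 * (1 + \<beta>) / 2"
    using mult_left_mono[of "s^2" "\<sigma>^2" "(1 + \<beta>)/2"] \<beta> by (simp add: field_simps)
  moreover have "1 - (1 + \<beta>)/2 * s^2 \<le> (1 + s^2) powr (-((1 + \<beta>)/2))"
    using \<beta> by (intro powr_neg_ge_one_minus) auto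
  ultimately have f2: "1 - \<sigma>^2 * (1 + \<beta>) / 2 \<le> (1 + s^2) powr (-((1 + \<beta>)/2))" by linarith
  have f1: "1 - \<sigma>^2 \<le> s / \<sigma>" using s(1) \<sigma>(1) by (simp add: field_simps)
  have "(\<beta> * s)^2 \<le> (\<beta> * \<sigma>)^2" using \<beta> s0 s(2) by (intro power_mono mult_left_mono) auto
  hence f3: "1 - (\<beta> * \<sigma>)^2 / 6 \<le> 1 - (\<beta> * s)^2 / 6" by simp
  have \<beta>\<sigma>sq: "(\<beta> * \<sigma>)^2 \<le> 1" using \<sigma>(3) \<beta> \<sigma>(1) by (intro power_le_one) auto
  have "1 - (1 + (1 + \<beta>)/2 + \<beta>^2/6) * \<sigma>^2 = 1 - \<sigma>^2 - \<sigma>^2 * (1 + \<beta>) / 2 - (\<beta> * \<sigma>)^2 / 6"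
    by (simp add: power_mult_distrib field_simps)
  also have "\<dots> \<le> (1 - \<sigma>^2) * (1 - \<sigma>^2 * (1 + \<beta>) / 2) * (1 - (\<beta> * \<sigma>)^2 / 6)"
    using \<sigma>sq \<sigma>(4) \<beta>\<sigma>sq \<beta> by (intro prod_one_minus_ge) auto
  also have "\<dots> \<le> (s / \<sigma>) * (1 + s^2) powr (-((1 + \<beta>)/2)) * (1 - (\<beta> * s)^2 / 6)"
    using f1 f2 f3 \<sigma>sq \<sigma>(1,4) \<beta>\<sigma>sq s0 by (intro mult_mono) auto
  finally show ?thesis .
qed

lemma phase_main_term_bounds:
  fixes \<beta> \<sigma> s :: real
  defines "P \<equiv> pi / (2 * \<beta> * \<sigma>) * (1 + s^2) powr (-\<beta>/2)"
  assumes \<beta>: "0 < \<beta>" and \<sigma>: "0 < \<sigma>" "\<sigma> \<le> 1/2" "\<beta> * \<sigma> \<le> 1" "\<sigma>^2 * (1 + \<beta>) / 2 \<le> 1"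
    and s: "(1 - \<sigma>^2) * \<sigma> \<le> s" "s \<le> \<sigma>"
  shows "sin (\<beta> * arctan s) * P \<le> pi/2"
    and "pi/2 * (1 - (1 + (1 + \<beta>)/2 + \<beta>^2/6) * \<sigma>^2) \<le> sin (\<beta> * arctan s) * P"
proof -
  note s0 = band_slope_bounds(3)[OF \<sigma>(1,2) s(1)]
  have \<beta>s: "\<beta> * s \<le> 1" using mult_left_mono[OF s(2) less_imp_le[OF \<beta>]] \<sigma>(3) by linarith
  note sin_bounds = sin_mult_arctan_bounds[OF s0 less_imp_le[OF \<beta>] \<beta>s]
  have "(\<beta> * s)^2 \<le> 1" using \<beta>s \<beta> s0 by (intro power_le_one) auto
  hence "0 \<le> \<beta> * s / sqrt (1 + s^2) * (1 - (\<beta> * s)^2 / 6)"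
    using \<beta> s0 by (intro mult_nonneg_nonneg divide_nonneg_nonneg) auto
  hence sin0: "0 \<le> sin (\<beta> * arctan s)" using sin_bounds(2) by linarith
  have "(1 + s^2) powr (-\<beta>/2) \<le> 1" using powr_mono[of "-\<beta>/2" 0 "1 + s^2"] \<beta>
    by (simp add: add_nonneg_eq_0_iff)
  hence P_le: "P \<le> pi / (2 * \<beta> * \<sigma>)"
    unfolding P_def using \<beta> \<sigma>(1) by (intro mult_left_le) auto
  have P0: "0 \<le> P" unfolding P_def using \<beta> \<sigma>(1) by (intro mult_nonneg_nonneg) auto
  have "sin (\<beta> * arctan s) * P \<le> (\<beta> * s) * (pi / (2 * \<beta> * \<sigma>))"
    using sin_bounds(1) sin0 P_le P0 by (intro mult_mono) auto
  also have "\<dots> = pi/2 * (s / \<sigma>)" using \<beta> by (simp add: field_simps)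
  also have "\<dots> \<le> pi/2" using mult_left_mono[of "s / \<sigma>" 1 "pi/2"] s(2) \<sigma>(1) by simp
  finally show "sin (\<beta> * arctan s) * P \<le> pi/2" .
  have "inverse (sqrt (1 + s^2)) = (1 + s^2) powr (-(1/2))"
    by (simp add: powr_half_sqrt[symmetric] powr_minus)
  moreover have "-((1 + \<beta>)/2) = -(1/2) + -\<beta>/2" by (simp add: field_simps)
  ultimately have exponents: "inverse (sqrt (1 + s^2)) * (1 + s^2) powr (-\<beta>/2) = (1 + s^2) powr (-((1 + \<beta>)/2))"
    by (simp only: powr_add)
  have "sqrt (1 + s^2) \<noteq> 0" by (simp add: add_nonneg_eq_0_iff)
  hence "(\<beta> * s / sqrt (1 + s^2) * (1 - (\<beta> * s)^2 / 6)) * P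
      = pi/2 * ((s / \<sigma>) * (inverse (sqrt (1 + s^2)) * (1 + s^2) powr (-\<beta>/2)) * (1 - (\<beta> * s)^2 / 6))"
    using \<beta> \<sigma>(1) by (simp add: P_def field_simps)
  also have "\<dots> = pi/2 * ((s / \<sigma>) * (1 + s^2) powr (-((1 + \<beta>)/2)) * (1 - (\<beta> * s)^2 / 6))"
    by (simp only: exponents)
  also have "\<dots> \<ge> pi/2 * (1 - (1 + (1 + \<beta>)/2 + \<beta>^2/6) * \<sigma>^2)"
    using band_factors_lower_bound[OF \<beta> \<sigma> s] by (intro mult_left_mono) auto
  finally show "pi/2 * (1 - (1 + (1 + \<beta>)/2 + \<beta>^2/6) * \<sigma>^2) \<le> sin (\<beta> * arctan s) * P"
    using sin_bounds(2) P0 by (meson mult_right_mono order_trans)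
qed

lemma phase_correction_term_bounds:
  fixes \<beta> \<sigma> s K Q :: real
  assumes \<beta>: "0 < \<beta>" and \<sigma>: "0 < \<sigma>" "\<sigma> \<le> 1/2" "\<beta> * \<sigma> \<le> 1"
    and s: "(1 - \<sigma>^2) * \<sigma> \<le> s" "s \<le> \<sigma>"
    and K: "0 \<le> K" and Q: "3 * pi * K * \<sigma> / \<beta> \<le> Q" "Q \<le> pi"
  shows "sin (\<beta> * arctan s) * Q \<le> pi"
    and "pi/2 * K * \<sigma>^2 \<le> sin (\<beta> * arctan s) * Q"
proof -
  have "0 \<le> 3 * pi * K * \<sigma> / \<beta>" using K \<beta> \<sigma>(1) by simp
  hence Q0: "0 \<le> Q" using Q(1) by linarith
  show "sin (\<beta> * arctan s) * Q \<le> pi"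
    using mult_right_mono[OF sin_le_one Q0, of "\<beta> * arctan s"] Q(2) by linarith
  note \<sigma>sq = band_slope_bounds(1)[OF \<sigma>(1,2) s(1)] and s2 = band_slope_bounds(2)[OF \<sigma>(1,2) s(1)]
    and s0 = band_slope_bounds(3)[OF \<sigma>(1,2) s(1)]
  have \<beta>s: "\<beta> * s \<le> 1" using mult_left_mono[OF s(2) less_imp_le[OF \<beta>]] \<sigma>(3) by linarith
  have "s^2 \<le> 1/4" using power_mono[OF s(2) s0, of 2] \<sigma>sq by simp
  hence "sqrt (1 + s^2) \<le> sqrt 4" by (intro real_sqrt_le_mono) simp
  hence "sqrt (1 + s^2) \<le> 2" by simp
  hence "\<beta> * (\<sigma> / 2) / 2 \<le> \<beta> * s / sqrt (1 + s^2)"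
    using \<beta> s0 mult_left_mono[OF s2, of \<beta>] by (intro frac_le) (auto intro: add_pos_nonneg)
  moreover have "(\<beta> * s)^2 \<le> 1" using \<beta>s \<beta> s0 by (intro power_le_one) auto
  hence "5/6 \<le> 1 - (\<beta> * s)^2 / 6" by simp
  ultimately have "\<beta> * (\<sigma> / 2) / 2 * (5/6) \<le> \<beta> * s / sqrt (1 + s^2) * (1 - (\<beta> * s)^2 / 6)"
    using \<beta> s0 by (intro mult_mono[of "\<beta> * (\<sigma> / 2) / 2"]) auto
  also have "\<dots> \<le> sin (\<beta> * arctan s)"
    using sin_mult_arctan_bounds(2)[OF s0 less_imp_le[OF \<beta>] \<beta>s] .
  finally have sin_ge: "5/24 * \<beta> * \<sigma> \<le> sin (\<beta> * arctan s)" by simp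
  have "5/24 * \<beta> * \<sigma> * (3 * pi * K * \<sigma> / \<beta>) \<le> sin (\<beta> * arctan s) * Q"
    using sin_ge Q(1) \<beta> \<sigma>(1) K by (intro mult_mono') auto
  moreover have "5/24 * \<beta> * \<sigma> * (3 * pi * K * \<sigma> / \<beta>) = 5/8 * (pi * K * \<sigma>^2)"
    using \<beta> by (simp add: field_simps power2_eq_square)
  moreover have "0 \<le> pi * K * \<sigma>^2" using K by simp
  ultimately show "pi/2 * K * \<sigma>^2 \<le> sin (\<beta> * arctan s) * Q" by linarith
qed

section \<open>Circle means and a maximum principle in the plane\<close>

lemma holomorphic_circle_mean:
  fixes h :: "complex \<Rightarrow> complex"
  assumes "h holomorphic_on S" "open S" "cball a s \<subseteq> S" "0 < s"
  shows "((\<lambda>t. h (a + of_real s * cis t)) has_integral (2 * of_real pi * h a)) {0..2*pi}"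
proof -
  have "continuous_on (cball a s) h"
    using assms holomorphic_on_imp_continuous_on holomorphic_on_subset by blast
  moreover have "h holomorphic_on ball a s"
    using assms(1,3) ball_subset_cball holomorphic_on_subset by blast
  ultimately have "((\<lambda>u. h u / (u - a)) has_contour_integral (2 * of_real pi * \<i> * h a)) (circlepath a s)"
    using Cauchy_integral_circlepath assms(4) by simp
  hence "((\<lambda>t. h (a + s * cis t) / (a + s * cis t - a) * s * \<i> * cis t)
      has_integral (2 * of_real pi * \<i> * h a)) {0..2*pi}"
    unfolding circlepath_def by (subst (asm) has_contour_integral_part_circlepath_iff) auto
  hence "((\<lambda>t. \<i> * h (a + s * cis t)) has_integral (2 * of_real pi * \<i> * h a)) {0..2*pi}"
    by (rule has_integral_eq[rotated]) (use assms(4) in \<open>simp add: field_simps\<close>)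
  hence "((\<lambda>t. (-\<i>) * (\<i> * h (a + s * cis t))) has_integral (-\<i>) * (2 * of_real pi * \<i> * h a)) {0..2*pi}"
    by (rule has_integral_mult_right)
  moreover have "\<And>w. (-\<i>) * (\<i> * w) = w" by (simp add: mult.assoc[symmetric])
  moreover have "-\<i> * (2 * of_real pi * \<i> * h a) = 2 * of_real pi * h a"
    by (simp add: complex_eq_iff)
  ultimately show ?thesis by (simp only:)
qed

lemma norm_sq_circle_mean:
  assumes "0 < s"
  shows "((\<lambda>t. cmod (a + of_real s * cis t)^2) has_integral (2 * pi * (cmod a^2 + s^2))) {0..2*pi}"
proof -
  have "(\<lambda>z. 2 * cnj a * (z - a)) holomorphic_on UNIV" by (intro holomorphic_intros)
  from has_integral_Re[OF holomorphic_circle_mean[OF this open_UNIV subset_UNIV[of "cball a s"] assms]]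
  have "((\<lambda>t. Re (2 * cnj a * (a + of_real s * cis t - a))) has_integral 0) {0..2*pi}" by simp
  moreover have "((\<lambda>t. cmod a^2 + s^2) has_integral (2 * pi * (cmod a^2 + s^2))) {0..2*pi}"
    using has_integral_const_real[of "cmod a^2 + s^2" 0 "2*pi"] by simp
  ultimately have "((\<lambda>t. Re (2 * cnj a * (a + of_real s * cis t - a)) + (cmod a^2 + s^2))
      has_integral (0 + 2 * pi * (cmod a^2 + s^2))) {0..2*pi}"
    by (rule has_integral_add)
  moreover have "Re (2 * cnj a * (a + of_real s * cis t - a)) + (cmod a^2 + s^2)
      = cmod (a + of_real s * cis t)^2" for t
  proof -
    have "cmod (a + w)^2 = cmod a^2 + cmod w^2 + Re (2 * cnj a * w)" for w
      by (simp only: cmod_power2) (simp add: power2_eq_square algebra_simps)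
    thus ?thesis using assms by (simp add: norm_mult)
  qed
  ultimately show ?thesis by simp
qed

lemma circle_mean_eq_of_has_integral:
  assumes "continuous_on {0..2*pi} g" "(g has_integral I) {0..2*pi}"
  shows "(1/(2*pi)) * (LINT \<theta>:{0..2*pi}|lborel. g \<theta>) = I / (2*pi)"
proof -
  have "set_integrable lborel {0..2*pi} g" by (rule borel_integrable_atLeastAtMost'[OF assms(1)])
  from set_borel_integral_eq_integral(2)[OF this] integral_unique[OF assms(2)] show ?thesis by simp
qed

lemma circle_mean_le_const:
  fixes g :: "real \<Rightarrow> real"
  assumes "set_integrable lborel {0..2*pi} g" "\<And>t. t \<in> {0..2*pi} \<Longrightarrow> g t \<le> M"
  shows "(1/(2*pi)) * (LINT t:{0..2*pi}|lborel. g t) \<le> M"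
proof -
  have "set_integrable lborel {0..2*pi} (\<lambda>_. M)"
    by (rule borel_integrable_atLeastAtMost') simp
  hence "(LINT t:{0..2*pi}|lborel. g t) \<le> (LINT t:{0..2*pi}|lborel. M)"
    by (rule set_integral_mono[OF assms(1) _ assms(2)])
  also have "\<dots> = 2 * pi * M"
    by (subst set_integral_const) (auto simp: measure_lborel_Icc)
  finally show ?thesis by (simp add: field_simps)
qed

definition subharmonic_on :: "complex set \<Rightarrow> (complex \<Rightarrow> real) \<Rightarrow> bool" where
  "subharmonic_on D f \<longleftrightarrow>
     (\<forall>w\<in>D. \<forall>e>0. \<exists>d>0. \<forall>z\<in>D. cmod (z - w) < d \<longrightarrow> f z < f w + e) \<and>
     (\<forall>a s. 0 < s \<longrightarrow> cball a s \<subseteq> D \<longrightarrow>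
        set_integrable lborel {0..2*pi} (\<lambda>\<theta>. f (a + of_real s * cis \<theta>)) \<and>
        f a \<le> (1/(2*pi)) * (LINT \<theta>:{0..2*pi}|lborel. f (a + of_real s * cis \<theta>)))"

lemma near_maximizers_accumulate:
  fixes g :: "'a::heine_borel \<Rightarrow> real"
  assumes "bounded D" "D \<noteq> {}" "bdd_above (g ` D)"
  obtains w where "w \<in> closure D" "\<forall>d>0. \<forall>e>0. \<exists>z\<in>D. dist z w < d \<and> Sup (g ` D) - e < g z"
proof -
  define M where "M = Sup (g ` D)"
  have "\<forall>n::nat. \<exists>z. z \<in> D \<and> M - 1 / Suc n < g z"
  proof
    fix n :: nat
    have "M - 1 / Suc n < Sup (g ` D)" unfolding M_def by simp
    then obtain y where "y \<in> g ` D" "M - 1 / Suc n < y"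
      using less_cSup_iff[OF _ assms(3)] assms(2) by auto
    thus "\<exists>z. z \<in> D \<and> M - 1 / Suc n < g z" by auto
  qed
  from choice[OF this] obtain zs where "\<forall>n. zs n \<in> D \<and> M - 1 / Suc n < g (zs n)" by blast
  hence zs: "\<And>n. zs n \<in> D" "\<And>n. M - 1 / Suc n < g (zs n)" by auto
  have "bounded (range zs)" using zs(1) by (intro bounded_subset[OF assms(1)]) auto
  then obtain w \<sigma> where \<sigma>: "strict_mono \<sigma>" "(zs \<circ> \<sigma>) \<longlonglongrightarrow> w"
    using bounded_imp_convergent_subsequence[of zs] by blast
  have "w \<in> closure D"
    unfolding closure_sequential using \<sigma>(2) zs(1) by (intro exI[of _ "zs \<circ> \<sigma>"]) auto
  moreover have "\<exists>z\<in>D. dist z w < d \<and> M - e < g z" if "0 < d" "0 < e" for d e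
  proof -
    have near: "eventually (\<lambda>n. dist (zs (\<sigma> n)) w < d) sequentially"
      using \<sigma>(2) \<open>0 < d\<close> unfolding tendsto_iff by auto
    obtain N :: nat where N: "1 / Suc N < e"
      using reals_Archimedean[OF \<open>0 < e\<close>] by (metis inverse_eq_divide of_nat_Suc)
    have "eventually (\<lambda>n. M - e < g (zs (\<sigma> n))) sequentially"
      unfolding eventually_sequentially
    proof (intro exI allI impI)
      fix n assume "N \<le> n"
      hence "1 / real (Suc (\<sigma> n)) \<le> 1 / Suc N"
        using seq_suble[OF \<sigma>(1), of n] by (simp add: frac_le)
      thus "M - e < g (zs (\<sigma> n))" using zs(2)[of "\<sigma> n"] N by linarith
    qed
    from eventually_happens[OF eventually_conj[OF near this]] show ?thesis using zs(1) by auto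
  qed
  ultimately show ?thesis using that unfolding M_def by blast
qed

lemma Sup_le_at_usc_accumulation_point:
  fixes g :: "'a::metric_space \<Rightarrow> real"
  assumes near: "\<forall>d>0. \<forall>e>0. \<exists>z\<in>D. dist z w < d \<and> Sup (g ` D) - e < g z"
    and usc: "\<And>e. 0 < e \<Longrightarrow> \<exists>d>0. \<forall>z\<in>D. dist z w < d \<longrightarrow> g z < g w + e"
  shows "Sup (g ` D) \<le> g w"
proof (rule field_le_epsilon)
  fix e :: real assume "0 < e"
  then obtain d where d: "0 < d" "\<forall>z\<in>D. dist z w < d \<longrightarrow> g z < g w + e/2"
    using usc[of "e/2"] by auto
  obtain z where z: "z \<in> D" "dist z w < d" "Sup (g ` D) - e/2 < g z"
    using near d(1) \<open>0 < e\<close> half_gt_zero by blast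
  have "g z < g w + e/2" using d(2) z(1,2) by blast
  with z(3) show "Sup (g ` D) \<le> g w + e" by linarith
qed

lemma subharmonic_add_continuous_usc:
  assumes f: "subharmonic_on D f" and u: "continuous_on D u" and D: "open D" and w: "w \<in> D"
    and e: "0 < e"
  shows "\<exists>d>0. \<forall>z\<in>D. dist z w < d \<longrightarrow> f z + u z < f w + u w + e"
proof -
  obtain d1 where d1: "0 < d1" "\<forall>z\<in>D. cmod (z - w) < d1 \<longrightarrow> f z < f w + e/2"
    using f w e unfolding subharmonic_on_def by (meson half_gt_zero)
  have "isCont u w" using u w D continuous_on_eq_continuous_at by blast
  then obtain d2 where d2: "0 < d2" "\<forall>z. dist z w < d2 \<longrightarrow> dist (u z) (u w) < e/2"
    using e unfolding continuous_at_eps_delta by (meson half_gt_zero)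
  have "f z + u z < f w + u w + e" if "z \<in> D" "dist z w < min d1 d2" for z
  proof -
    have "f z < f w + e/2" using d1(2) that by (simp add: dist_norm)
    moreover have "dist (u z) (u w) < e/2" using d2(2) that by simp
    ultimately show ?thesis unfolding dist_real_def by linarith
  qed
  thus ?thesis using d1(1) d2(1) by (intro exI[of _ "min d1 d2"]) auto
qed

lemma subharmonic_add_strict_submean_lt_bound:
  assumes f: "subharmonic_on D f" and u: "continuous_on D u" and s: "0 < s" "cball w s \<subseteq> D"
    and strict: "u w < (1/(2*pi)) * (LINT \<theta>:{0..2*pi}|lborel. u (w + of_real s * cis \<theta>))"
    and bdd: "\<And>z. z \<in> D \<Longrightarrow> f z + u z \<le> M"
  shows "f w + u w < M"
proof -
  have circle: "w + of_real s * cis t \<in> D" for t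
    using s by (intro subsetD[OF s(2)]) (simp add: dist_norm norm_mult)
  have fi: "set_integrable lborel {0..2*pi} (\<lambda>\<theta>. f (w + of_real s * cis \<theta>))"
    and fm: "f w \<le> (1/(2*pi)) * (LINT \<theta>:{0..2*pi}|lborel. f (w + of_real s * cis \<theta>))"
    using f s unfolding subharmonic_on_def by auto
  have ui: "set_integrable lborel {0..2*pi} (\<lambda>\<theta>. u (w + of_real s * cis \<theta>))"
    using circle
    by (auto intro!: borel_integrable_atLeastAtMost' continuous_on_compose2[OF u] continuous_intros)
  have "f w + u w
      < (1/(2*pi)) * (LINT \<theta>:{0..2*pi}|lborel. f (w + of_real s * cis \<theta>) + u (w + of_real s * cis \<theta>))"
    using fm strict set_integral_add(2)[OF fi ui] by (simp add: distrib_left)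
  also have "\<dots> \<le> M"
    using circle set_integral_add(1)[OF fi ui] bdd by (intro circle_mean_le_const) auto
  finally show ?thesis .
qed

text \<open>The perturbation u has to satisfy the strict sub-mean value inequality: this is what rules
  out an interior maximum of f + u without any connectedness argument.\<close>
lemma subharmonic_max_principle:
  fixes f u :: "complex \<Rightarrow> real"
  assumes D: "bounded D" "open D" and f: "subharmonic_on D f" and u: "continuous_on D u"
    and strict: "\<And>a s. 0 < s \<Longrightarrow> cball a s \<subseteq> D \<Longrightarrow>
        u a < (1/(2*pi)) * (LINT \<theta>:{0..2*pi}|lborel. u (a + of_real s * cis \<theta>))"
    and bdd: "\<And>z. z \<in> D \<Longrightarrow> f z + u z \<le> K"
    and boundary: "\<And>w e. w \<in> closure D \<Longrightarrow> w \<notin> D \<Longrightarrow> 0 < e \<Longrightarrow>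
        \<exists>d>0. \<forall>z\<in>D. cmod (z - w) < d \<longrightarrow> f z + u z < e"
    and z0: "z0 \<in> D"
  shows "f z0 + u z0 \<le> 0"
proof (rule ccontr)
  define g where "g z = f z + u z" for z
  define M where "M = Sup (g ` D)"
  assume "\<not> f z0 + u z0 \<le> 0"
  moreover have bdd_g: "bdd_above (g ` D)" using bdd
    by (auto simp: g_def intro!: bdd_aboveI[where M = K])
  ultimately have M: "0 < M" using z0 cSup_upper[OF _ bdd_g, of "g z0"] by (auto simp: M_def g_def)
  have g_le_M: "g z \<le> M" if "z \<in> D" for z using that bdd_g unfolding M_def
    by (intro cSup_upper) auto
  obtain w where w: "w \<in> closure D" and near: "\<forall>d>0. \<forall>e>0. \<exists>z\<in>D. dist z w < d \<and> M - e < g z"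
    using near_maximizers_accumulate[OF D(1) _ bdd_g] z0 unfolding M_def by blast
  show False
  proof (cases "w \<in> D")
    case True
    have "M \<le> g w" unfolding M_def g_def
      by (rule Sup_le_at_usc_accumulation_point)
        (use near subharmonic_add_continuous_usc[OF f u D(2) True] in \<open>auto simp: M_def g_def\<close>)
    moreover obtain s where "0 < s" "cball w s \<subseteq> D" using D(2) True open_contains_cball by blast
    ultimately show False
      using subharmonic_add_strict_submean_lt_bound[OF f u _ _ strict] g_le_M
      by (fastforce simp: g_def)
  next
    case False
    obtain d where "0 < d" "\<forall>z\<in>D. cmod (z - w) < d \<longrightarrow> g z < M/2"
      using boundary[OF w False, of "M/2"] M by (auto simp: g_def)
    moreover obtain z where "z \<in> D" "dist z w < d" "M - M/2 < g z"
      using near \<open>0 < d\<close> M by (meson half_gt_zero)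
    ultimately show False by (auto simp: dist_norm)
  qed
qed

section \<open>The barrier on a planar cusp\<close>

definition cusp_exponent :: "real \<Rightarrow> real" where
  "cusp_exponent \<alpha> = 1/\<alpha> - 1"

definition barrier_A :: "real \<Rightarrow> real \<Rightarrow> real" where
  "barrier_A \<alpha> C = pi * C powr (1/\<alpha>) / (2 * cusp_exponent \<alpha>)"

definition barrier_K :: "real \<Rightarrow> real" where
  "barrier_K \<alpha> = 1 + (1 + cusp_exponent \<alpha>) / 2 + (cusp_exponent \<alpha>)^2 / 6"

definition barrier_B :: "real \<Rightarrow> real \<Rightarrow> real" where
  "barrier_B \<alpha> C = 3 * pi * barrier_K \<alpha> / (cusp_exponent \<alpha> * C powr (1/\<alpha>))"

text \<open>The boundary C |y| powr \<alpha> = x of the planar cusp is the curve |y| = x * cusp_slope \<alpha> C x.\<close>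
definition cusp_slope :: "real \<Rightarrow> real \<Rightarrow> real \<Rightarrow> real" where
  "cusp_slope \<alpha> C x = (x / C) powr (1/\<alpha>) / x"

text \<open>The constant A makes the phase of -A z powr (-\<beta>) equal to \<pi>/2 on the cusp boundary to
  first order in the slope; the correction B z powr \<beta> compensates the second-order error.\<close>
definition barrier :: "real \<Rightarrow> real \<Rightarrow> complex \<Rightarrow> real" where
  "barrier \<alpha> C z = Re (exp (- of_real (barrier_A \<alpha> C) * z powr of_real (- cusp_exponent \<alpha>)
                            + of_real (barrier_B \<alpha> C) * z powr of_real (cusp_exponent \<alpha>)))"

definition barrier_admissible :: "real \<Rightarrow> real \<Rightarrow> real \<Rightarrow> bool" where
  "barrier_admissible \<alpha> C x \<longleftrightarrow>
     cusp_slope \<alpha> C x \<le> 1/2 \<and> cusp_exponent \<alpha> * cusp_slope \<alpha> C x \<le> 1 \<and>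
     (cusp_slope \<alpha> C x)^2 * (1 + cusp_exponent \<alpha>) / 2 \<le> 1 \<and>
     barrier_B \<alpha> C * (2 * x) powr cusp_exponent \<alpha> \<le> pi"

definition planar_cusp :: "real \<Rightarrow> real \<Rightarrow> real \<Rightarrow> complex set" where
  "planar_cusp \<alpha> C x1 = {z. 0 < Re z \<and> Re z < x1 \<and> C * \<bar>Im z\<bar> powr \<alpha> < Re z}"

lemma cpowr_of_real_polar:
  fixes z :: complex assumes "z \<noteq> 0"
  shows "z powr (of_real e) = of_real (cmod z powr e) * cis (e * Arg z)"
proof -
  have "z powr (of_real e) = exp (of_real e * Ln z)" using assms by (simp add: powr_def)
  also have "\<dots> = exp (of_real (e * ln (cmod z)) + \<i> * of_real (e * Arg z))"
    using assms by (simp add: Ln_Arg algebra_simps)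
  also have "\<dots> = of_real (exp (e * ln (cmod z))) * cis (e * Arg z)"
    by (simp add: exp_add cis_conv_exp exp_of_real[symmetric] del: of_real_mult)
  also have "exp (e * ln (cmod z)) = cmod z powr e" using assms by (simp add: powr_def)
  finally show ?thesis .
qed

lemma Re_exp_powr_polar:
  fixes z :: complex and A B b :: real assumes "z \<noteq> 0"
  shows "Re (exp (- of_real A * z powr of_real (-b) + of_real B * z powr of_real b)) =
     exp (cos (b * Arg z) * (B * cmod z powr b - A * cmod z powr (-b))) *
     cos (sin (b * Arg z) * (A * cmod z powr (-b) + B * cmod z powr b))"
proof -
  let ?w = "- of_real A * z powr of_real (-b) + of_real B * z powr of_real b"
  have w: "?w = - of_real A * (of_real (cmod z powr (-b)) * cis (-b * Arg z))
      + of_real B * (of_real (cmod z powr b) * cis (b * Arg z))"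
    using assms by (simp add: cpowr_of_real_polar del: of_real_minus)
  have "Re ?w = cos (b * Arg z) * (B * cmod z powr b - A * cmod z powr (-b))"
    and "Im ?w = sin (b * Arg z) * (A * cmod z powr (-b) + B * cmod z powr b)"
    unfolding w by (simp_all add: algebra_simps)
  moreover have "Re (exp ?w) = exp (Re ?w) * cos (Im ?w)" by (subst exp_eq_polar) simp
  ultimately show ?thesis by simp
qed

locale cusp_barrier =
  fixes \<alpha> C :: real
  assumes alpha_pos: "0 < \<alpha>" and alpha_less_one: "\<alpha> < 1" and C_pos: "0 < C"
begin

abbreviation "\<beta> \<equiv> cusp_exponent \<alpha>"
abbreviation "A \<equiv> barrier_A \<alpha> C"
abbreviation "B \<equiv> barrier_B \<alpha> C"
abbreviation "K \<equiv> barrier_K \<alpha>"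
abbreviation "slope \<equiv> cusp_slope \<alpha> C"
abbreviation "u \<equiv> barrier \<alpha> C"
abbreviation "D \<equiv> planar_cusp \<alpha> C"
text \<open>Points with band_edge x \<le> |y| \<le> x * slope x form the thin band along the curved boundary
  of the planar cusp on which the barrier is non-positive.\<close>
abbreviation "band_edge x \<equiv> (1 - (slope x)^2) * (x * slope x)"

lemma exponent_pos: "0 < \<beta>"
  using alpha_pos alpha_less_one by (simp add: cusp_exponent_def field_simps)

lemma A_pos: "0 < A"
  using exponent_pos C_pos by (simp add: barrier_A_def)

lemma K_pos: "0 < K"
  using exponent_pos by (simp add: barrier_K_def add_pos_nonneg)

lemma B_pos: "0 < B"
  using exponent_pos C_pos K_pos by (simp add: barrier_B_def)

lemma slope_eq: assumes "0 < x" shows "slope x = x powr \<beta> / C powr (1/\<alpha>)"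
proof -
  have "(x / C) powr (1/\<alpha>) = x powr (1/\<alpha>) / C powr (1/\<alpha>)" using assms C_pos
    by (simp add: powr_divide)
  moreover have "x powr (1/\<alpha>) = x powr \<beta> * x"
    using assms by (simp add: cusp_exponent_def powr_diff field_simps)
  ultimately show ?thesis using assms by (simp add: cusp_slope_def)
qed

lemma slope_pos: "0 < x \<Longrightarrow> 0 < slope x"
  using slope_eq C_pos by simp

lemma slope_mono: "0 < x \<Longrightarrow> x \<le> x' \<Longrightarrow> slope x \<le> slope x'"
  using slope_eq[of x] slope_eq[of x'] C_pos exponent_pos
  by (simp add: divide_right_mono powr_mono2)

lemma A_mult_powr: "0 < x \<Longrightarrow> A * x powr (-\<beta>) = pi / (2 * \<beta> * slope x)"
  using exponent_pos C_pos
  by (simp add: slope_eq barrier_A_def powr_minus field_simps)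

lemma B_mult_powr: "0 < x \<Longrightarrow> B * x powr \<beta> = 3 * pi * K * slope x / \<beta>"
  using exponent_pos C_pos by (simp add: slope_eq barrier_B_def)

lemma admissible_mono:
  assumes "barrier_admissible \<alpha> C x'" "0 < x" "x \<le> x'"
  shows "barrier_admissible \<alpha> C x"
proof -
  have s: "slope x \<le> slope x'" and s0: "0 < slope x" using slope_mono slope_pos assms(2,3) by auto
  have "(slope x)^2 \<le> (slope x')^2" using s s0 by (intro power_mono) auto
  hence "(slope x)^2 * (1 + \<beta>) / 2 \<le> (slope x')^2 * (1 + \<beta>) / 2"
    using exponent_pos by (intro divide_right_mono mult_right_mono) auto
  moreover have "\<beta> * slope x \<le> \<beta> * slope x'" using s exponent_pos by (simp add: mult_left_mono)
  moreover have "(2*x) powr \<beta> \<le> (2*x') powr \<beta>" using assms exponent_pos by (intro powr_mono2) auto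
  hence "B * (2*x) powr \<beta> \<le> B * (2*x') powr \<beta>" using B_pos by (simp add: mult_left_mono)
  ultimately show ?thesis using assms(1) s unfolding barrier_admissible_def by linarith
qed

lemma cusp_ineq_iff_slope:
  assumes "0 < x" "0 \<le> y"
  shows "C * y powr \<alpha> < x \<longleftrightarrow> y < x * slope x"
    and "C * y powr \<alpha> \<le> x \<longleftrightarrow> y \<le> x * slope x"
proof -
  define v where "v = (x/C) powr (1/\<alpha>)"
  have xs: "x * slope x = v" using assms unfolding cusp_slope_def v_def by simp
  have inv: "v powr \<alpha> = x/C" using assms C_pos alpha_pos by (simp add: v_def powr_powr)
  have less: "a powr \<alpha> < b powr \<alpha> \<longleftrightarrow> a < b" if "0 \<le> a" "0 \<le> b" for a b :: real
  proof
    assume "a < b" thus "a powr \<alpha> < b powr \<alpha>" using powr_less_mono2 alpha_pos that(1) by blast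
  next
    assume "a powr \<alpha> < b powr \<alpha>"
    moreover have "\<not> a < b \<Longrightarrow> b powr \<alpha> \<le> a powr \<alpha>" using that alpha_pos by (intro powr_mono2) auto
    ultimately show "a < b" by linarith
  qed
  have v0: "0 \<le> v" by (simp add: v_def)
  have x_eq: "x = C * v powr \<alpha>" using inv C_pos by (simp add: field_simps)
  have "C * y powr \<alpha> < x \<longleftrightarrow> y powr \<alpha> < v powr \<alpha>" using C_pos unfolding x_eq by simp
  thus "C * y powr \<alpha> < x \<longleftrightarrow> y < x * slope x" using less[OF assms(2) v0] xs by simp
  have "C * y powr \<alpha> \<le> x \<longleftrightarrow> \<not> v powr \<alpha> < y powr \<alpha>"
    using C_pos unfolding x_eq by (simp add: not_less)
  thus "C * y powr \<alpha> \<le> x \<longleftrightarrow> y \<le> x * slope x" using less[OF v0 assms(2)] xs by auto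
qed

lemma barrier_exp_holomorphic:
  "(\<lambda>z. exp (- of_real A * z powr of_real (- \<beta>) + of_real B * z powr of_real \<beta>))
     holomorphic_on {z. 0 < Re z}"
  by (intro holomorphic_intros) (auto simp: complex_nonpos_Reals_iff)

lemma barrier_continuous: "continuous_on {z. 0 < Re z} u"
proof -
  have "continuous_on {z. 0 < Re z}
      (\<lambda>z. exp (- of_real A * z powr of_real (- \<beta>) + of_real B * z powr of_real \<beta>))"
    using barrier_exp_holomorphic holomorphic_on_imp_continuous_on by blast
  hence "continuous_on {z. 0 < Re z}
      (\<lambda>z. Re (exp (- of_real A * z powr of_real (- \<beta>) + of_real B * z powr of_real \<beta>)))"
    by (rule continuous_on_Re)
  thus ?thesis unfolding barrier_def[abs_def] .
qed

lemma barrier_circle_mean: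
  assumes "cball a s \<subseteq> {z. 0 < Re z}" "0 < s"
  shows "((\<lambda>t. u (a + of_real s * cis t)) has_integral (2 * pi * u a)) {0..2*pi}"
  using has_integral_Re[OF holomorphic_circle_mean[OF barrier_exp_holomorphic _ assms]]
  by (simp add: barrier_def open_halfspace_Re_gt)

lemma barrier_polar:
  assumes "0 < Re z"
  shows "u z = exp (cos (\<beta> * arctan (\<bar>Im z\<bar> / Re z)) * (B * cmod z powr \<beta> - A * cmod z powr (-\<beta>))) *
     cos (sin (\<beta> * arctan (\<bar>Im z\<bar> / Re z)) * (A * cmod z powr (-\<beta>) + B * cmod z powr \<beta>))"
proof -
  have "Arg z = arctan (Im z / Re z)" by (rule arg_conv_arctan[OF assms])
  hence "Arg z = sgn (Im z) * arctan (\<bar>Im z\<bar> / Re z)"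
    by (cases "0 \<le> Im z") (auto simp: arctan_minus[symmetric])
  moreover have "z \<noteq> 0" using assms by auto
  ultimately show ?thesis
    unfolding barrier_def using Re_exp_powr_polar[of z A \<beta> B]
    by (cases "0 \<le> Im z") (auto simp: sgn_if)
qed

lemma barrier_correction_term_bounds:
  assumes x: "0 < x" "barrier_admissible \<alpha> C x" and y: "0 \<le> y" "y \<le> x * slope x"
  shows "3 * pi * K * slope x / \<beta> \<le> B * sqrt (x^2 + y^2) powr \<beta>"
    and "B * sqrt (x^2 + y^2) powr \<beta> \<le> pi"
proof -
  have "sqrt (x^2 + y^2) powr \<beta> = x powr \<beta> * (1 + (y/x)^2) powr (\<beta>/2)"
    by (rule sqrt_sum_squares_powr[OF x(1)])
  moreover have "1 \<le> (1 + (y/x)^2) powr (\<beta>/2)" using exponent_pos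
    by (intro ge_one_powr_ge_zero) auto
  ultimately have "x powr \<beta> \<le> sqrt (x^2 + y^2) powr \<beta>" using x(1)
    by (simp add: mult_le_cancel_left1)
  hence "B * x powr \<beta> \<le> B * sqrt (x^2 + y^2) powr \<beta>" using B_pos by (simp add: mult_left_mono)
  thus "3 * pi * K * slope x / \<beta> \<le> B * sqrt (x^2 + y^2) powr \<beta>" using B_mult_powr[OF x(1)] by simp
  have "x * slope x \<le> x" using x unfolding barrier_admissible_def by (intro mult_left_le) auto
  hence "y^2 \<le> x^2" using y by (intro power_mono) auto
  moreover have "(2 * x)^2 = 4 * x^2" by (simp add: power_mult_distrib)
  ultimately have "x^2 + y^2 \<le> (2 * x)^2" using zero_le_power2[of x] by linarith
  hence "sqrt (x^2 + y^2) \<le> sqrt ((2 * x)^2)" by (rule real_sqrt_le_mono)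
  hence "sqrt (x^2 + y^2) \<le> 2 * x" using x(1) by (simp only: real_sqrt_abs)
  hence "B * sqrt (x^2 + y^2) powr \<beta> \<le> B * (2 * x) powr \<beta>"
    using B_pos exponent_pos by (intro mult_left_mono powr_mono2) auto
  thus "B * sqrt (x^2 + y^2) powr \<beta> \<le> pi" using x(2) unfolding barrier_admissible_def by linarith
qed

lemma barrier_phase_in_band:
  assumes x: "0 < x" "barrier_admissible \<alpha> C x" and y: "band_edge x \<le> y" "y \<le> x * slope x"
  defines "r \<equiv> sqrt (x^2 + y^2)"
  shows "pi/2 \<le> sin (\<beta> * arctan (y/x)) * (A * r powr (-\<beta>) + B * r powr \<beta>)"
    and "sin (\<beta> * arctan (y/x)) * (A * r powr (-\<beta>) + B * r powr \<beta>) \<le> 3*pi/2"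
proof -
  define \<sigma> where "\<sigma> = slope x"
  define s where "s = y / x"
  have \<sigma>: "0 < \<sigma>" "\<sigma> \<le> 1/2" "\<beta> * \<sigma> \<le> 1" "\<sigma>^2 * (1 + \<beta>) / 2 \<le> 1"
    using x slope_pos unfolding barrier_admissible_def \<sigma>_def by auto
  have s: "(1 - \<sigma>^2) * \<sigma> \<le> s" "s \<le> \<sigma>"
    using y x(1) by (simp_all add: s_def \<sigma>_def field_simps)
  have "0 \<le> y" using band_slope_bounds(3)[OF \<sigma>(1,2) s(1)] x(1)
    by (simp add: s_def zero_le_divide_iff)
  note Q = barrier_correction_term_bounds[OF x this y(2), folded r_def \<sigma>_def]
  have "A * r powr (-\<beta>) = (A * x powr (-\<beta>)) * (1 + s^2) powr (-\<beta>/2)"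
    using sqrt_sum_squares_powr[OF x(1), of y "-\<beta>"] by (simp add: r_def s_def)
  hence P: "A * r powr (-\<beta>) = pi / (2 * \<beta> * \<sigma>) * (1 + s^2) powr (-\<beta>/2)"
    using A_mult_powr[OF x(1)] by (simp add: \<sigma>_def)
  note main = phase_main_term_bounds[OF exponent_pos \<sigma> s]
  note corr = phase_correction_term_bounds[OF exponent_pos \<sigma>(1-3) s less_imp_le[OF K_pos] Q]
  have K: "K = 1 + (1 + \<beta>)/2 + \<beta>^2/6" by (simp add: barrier_K_def)
  have split: "sin (\<beta> * arctan (y/x)) * (A * r powr (-\<beta>) + B * r powr \<beta>)
      = sin (\<beta> * arctan s) * (pi / (2 * \<beta> * \<sigma>) * (1 + s^2) powr (-\<beta>/2))
        + sin (\<beta> * arctan s) * (B * r powr \<beta>)"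
    unfolding P s_def by (simp add: distrib_left)
  show "pi/2 \<le> sin (\<beta> * arctan (y/x)) * (A * r powr (-\<beta>) + B * r powr \<beta>)"
    using main(2) corr(2) unfolding split K by (simp add: algebra_simps)
  show "sin (\<beta> * arctan (y/x)) * (A * r powr (-\<beta>) + B * r powr \<beta>) \<le> 3*pi/2"
    using main(1) corr(1) unfolding split by simp
qed

lemma barrier_nonpos_in_band:
  assumes "0 < x" "barrier_admissible \<alpha> C x" "band_edge x \<le> \<bar>y\<bar>" "\<bar>y\<bar> \<le> x * slope x"
  shows "u (Complex x y) \<le> 0"
proof -
  have "cmod (Complex x y) = sqrt (x^2 + \<bar>y\<bar>^2)" by (simp add: cmod_def)
  hence "cos (sin (\<beta> * arctan (\<bar>y\<bar>/x)) * (A * cmod (Complex x y) powr (-\<beta>) + B * cmod (Complex x y) powr \<beta>)) \<le> 0"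
    using barrier_phase_in_band[OF assms] cos_nonpos_between by simp
  thus ?thesis using barrier_polar[of "Complex x y"] assms(1) by (simp add: mult_nonneg_nonpos)
qed

lemma barrier_on_axis: "0 < t \<Longrightarrow> exp (- A * t powr (-\<beta>)) \<le> u (of_real t)"
  using barrier_polar[of "of_real t"] B_pos by simp

lemma barrier_le:
  assumes x: "0 < Re z" "barrier_admissible \<alpha> C (Re z)" and y: "\<bar>Im z\<bar> \<le> Re z * slope (Re z)"
  shows "u z \<le> exp (pi - A/2 * cmod z powr (-\<beta>))"
proof -
  define \<phi> where "\<phi> = arctan (\<bar>Im z\<bar> / Re z)"
  have adm: "slope (Re z) \<le> 1/2" "\<beta> * slope (Re z) \<le> 1" "B * (2 * Re z) powr \<beta> \<le> pi"
    using x(2) unfolding barrier_admissible_def by auto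
  have "\<phi> \<le> \<bar>Im z\<bar> / Re z" unfolding \<phi>_def using x(1) by (intro arctan_le_self) simp
  also have "\<dots> \<le> slope (Re z)" using y x(1) by (simp add: field_simps)
  finally have "\<beta> * \<phi> \<le> \<beta> * slope (Re z)" using exponent_pos by (simp add: mult_left_mono)
  hence "\<beta> * \<phi> \<le> 1" using adm(2) by linarith
  moreover have "0 \<le> \<beta> * \<phi>" using exponent_pos x(1) by (simp add: \<phi>_def)
  ultimately have "(\<beta> * \<phi>)^2 \<le> 1" by (simp add: power_le_one)
  hence cos12: "1/2 \<le> cos (\<beta> * \<phi>)" using cos_ge_one_minus_sq_half[of "\<beta> * \<phi>"] by linarith
  have "Re z * slope (Re z) \<le> Re z" using adm(1) x(1) by (intro mult_left_le) auto
  hence "\<bar>Im z\<bar> \<le> Re z" using y by linarith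
  hence "cmod z \<le> 2 * Re z" using cmod_le[of z] x(1) by simp
  hence "B * cmod z powr \<beta> \<le> B * (2 * Re z) powr \<beta>"
    using B_pos exponent_pos by (intro mult_left_mono powr_mono2) auto
  hence B_le: "B * cmod z powr \<beta> \<le> pi" using adm(3) by linarith
  have nonneg: "0 \<le> B * cmod z powr \<beta>" "0 \<le> A * cmod z powr (-\<beta>)" using B_pos A_pos by auto
  have "cos (\<beta> * \<phi>) * (B * cmod z powr \<beta> - A * cmod z powr (-\<beta>))
      = cos (\<beta> * \<phi>) * (B * cmod z powr \<beta>) - cos (\<beta> * \<phi>) * (A * cmod z powr (-\<beta>))"
    by (simp add: algebra_simps)
  also have "\<dots> \<le> 1 * (B * cmod z powr \<beta>) - 1/2 * (A * cmod z powr (-\<beta>))"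
    using cos12 nonneg by (intro diff_mono mult_right_mono) auto
  finally have "cos (\<beta> * \<phi>) * (B * cmod z powr \<beta> - A * cmod z powr (-\<beta>)) \<le> pi - A/2 * cmod z powr (-\<beta>)"
    using B_le by simp
  hence "exp (cos (\<beta> * \<phi>) * (B * cmod z powr \<beta> - A * cmod z powr (-\<beta>)))
      \<le> exp (pi - A/2 * cmod z powr (-\<beta>))" by simp
  moreover have "u z \<le> exp (cos (\<beta> * \<phi>) * (B * cmod z powr \<beta> - A * cmod z powr (-\<beta>)))"
    using barrier_polar[OF x(1)] mult_left_le[OF cos_le_one] unfolding \<phi>_def by simp
  ultimately show ?thesis by linarith
qed

lemma open_planar_cusp: "open (D x1)"
proof -
  have "continuous_on UNIV (\<lambda>z::complex. C * \<bar>Im z\<bar> powr \<alpha>)"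
    using alpha_pos
    by (intro continuous_on_mult_left continuous_on_powr') (auto intro!: continuous_intros)
  hence "open ({z. 0 < Re z} \<inter> {z. Re z < x1} \<inter> {z. C * \<bar>Im z\<bar> powr \<alpha> < Re z})"
    by (intro open_Int open_halfspace_Re_gt open_halfspace_Re_lt open_Collect_less continuous_on_Re
        continuous_on_id) auto
  moreover have "D x1 = {z. 0 < Re z} \<inter> {z. Re z < x1} \<inter> {z. C * \<bar>Im z\<bar> powr \<alpha> < Re z}"
    by (auto simp: planar_cusp_def)
  ultimately show ?thesis by simp
qed

lemma closure_planar_cusp:
  "closure (D x1) \<subseteq> {z. 0 \<le> Re z \<and> Re z \<le> x1 \<and> C * \<bar>Im z\<bar> powr \<alpha> \<le> Re z}"
proof (rule closure_minimal)
  show "D x1 \<subseteq> {z. 0 \<le> Re z \<and> Re z \<le> x1 \<and> C * \<bar>Im z\<bar> powr \<alpha> \<le> Re z}"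
    by (auto simp: planar_cusp_def)
  have "continuous_on UNIV (\<lambda>z::complex. C * \<bar>Im z\<bar> powr \<alpha>)"
    using alpha_pos
    by (intro continuous_on_mult_left continuous_on_powr') (auto intro!: continuous_intros)
  hence "closed ({z. 0 \<le> Re z} \<inter> {z. Re z \<le> x1} \<inter> {z. C * \<bar>Im z\<bar> powr \<alpha> \<le> Re z})"
    by (intro closed_Int closed_halfspace_Re_ge closed_halfspace_Re_le closed_Collect_le continuous_on_Re
        continuous_on_id) auto
  moreover have "{z. 0 \<le> Re z \<and> Re z \<le> x1 \<and> C * \<bar>Im z\<bar> powr \<alpha> \<le> Re z}
      = {z. 0 \<le> Re z} \<inter> {z. Re z \<le> x1} \<inter> {z. C * \<bar>Im z\<bar> powr \<alpha> \<le> Re z}" by auto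
  ultimately show "closed {z. 0 \<le> Re z \<and> Re z \<le> x1 \<and> C * \<bar>Im z\<bar> powr \<alpha> \<le> Re z}" by simp
qed

lemma planar_cusp_subset_right_half_plane: "D x1 \<subseteq> {z. 0 < Re z}"
  by (auto simp: planar_cusp_def)

lemma in_planar_cusp:
  assumes "barrier_admissible \<alpha> C x1" "z \<in> D x1"
  shows "barrier_admissible \<alpha> C (Re z)" "\<bar>Im z\<bar> < Re z * slope (Re z)" "cmod z \<le> 2 * x1"
proof -
  have z: "0 < Re z" "Re z < x1" "C * \<bar>Im z\<bar> powr \<alpha> < Re z" using assms(2)
    by (auto simp: planar_cusp_def)
  show adm: "barrier_admissible \<alpha> C (Re z)" using admissible_mono[OF assms(1) z(1)] z(2) by simp
  show im: "\<bar>Im z\<bar> < Re z * slope (Re z)" using cusp_ineq_iff_slope(1)[OF z(1), of "\<bar>Im z\<bar>"] z(3)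
    by simp
  have "Re z * slope (Re z) \<le> Re z" using adm z(1)
    by (intro mult_left_le) (auto simp: barrier_admissible_def)
  hence "cmod z \<le> Re z + Re z" using cmod_le[of z] im z(1) by linarith
  thus "cmod z \<le> 2 * x1" using z(2) by simp
qed

lemma bounded_planar_cusp: "barrier_admissible \<alpha> C x1 \<Longrightarrow> bounded (D x1)"
  unfolding bounded_iff using in_planar_cusp(3) by blast

lemma barrier_small_near_vertex:
  assumes "barrier_admissible \<alpha> C x1" "0 < e"
  shows "\<exists>d>0. \<forall>z\<in>D x1. cmod z < d \<longrightarrow> u z < e"
proof -
  define L where "L = 2 * \<bar>pi - ln e\<bar> / A + 1"
  have "0 \<le> 2 * \<bar>pi - ln e\<bar> / A" using A_pos by simp
  hence L0: "0 < L" by (simp add: L_def)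
  have "A/2 * L = \<bar>pi - ln e\<bar> + A/2" using A_pos by (simp add: L_def field_simps)
  hence L: "0 < L" "\<bar>pi - ln e\<bar> \<le> A/2 * L" using A_pos L0 by linarith+
  define d where "d = (1/L) powr (1/\<beta>)"
  have "u z < e" if z: "z \<in> D x1" "cmod z < d" for z
  proof -
    have "0 < cmod z" using z(1) by (auto simp: planar_cusp_def)
    hence "cmod z powr \<beta> < d powr \<beta>" using z(2) exponent_pos by (intro powr_less_mono2) auto
    also have "d powr \<beta> = 1/L" using L(1) exponent_pos by (simp add: d_def powr_powr)
    finally have "L < cmod z powr (-\<beta>)"
      using \<open>0 < cmod z\<close> L(1) by (simp add: powr_minus field_simps)
    hence "A/2 * L < A/2 * cmod z powr (-\<beta>)" using A_pos by simp
    hence "pi - ln e < A/2 * cmod z powr (-\<beta>)" using L(2) by linarith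
    hence "exp (pi - A/2 * cmod z powr (-\<beta>)) < exp (ln e)" by simp
    moreover have "u z \<le> exp (pi - A/2 * cmod z powr (-\<beta>))"
      using barrier_le in_planar_cusp[OF assms(1) z(1)] z(1)
      by (auto simp: planar_cusp_def less_imp_le)
    ultimately show ?thesis using assms(2) by simp
  qed
  moreover have "0 < d" using L(1) by (simp add: d_def)
  ultimately show ?thesis by blast
qed

lemma barrier_nonpos_on_frontier:
  assumes x1: "0 < x1" "barrier_admissible \<alpha> C x1"
    and w: "w \<in> closure (D x1)" "w \<notin> D x1" "0 < Re w"
    and not_core: "\<not> (Re w = x1 \<and> \<bar>Im w\<bar> < band_edge x1)"
  shows "u w \<le> 0"
proof -
  have wc: "Re w \<le> x1" "C * \<bar>Im w\<bar> powr \<alpha> \<le> Re w" using closure_planar_cusp w(1) by auto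
  have adm: "barrier_admissible \<alpha> C (Re w)" using admissible_mono[OF x1(2) w(3) wc(1)] .
  have le: "\<bar>Im w\<bar> \<le> Re w * slope (Re w)" using cusp_ineq_iff_slope(2)[OF w(3)] wc(2) by simp
  have "band_edge (Re w) \<le> \<bar>Im w\<bar>"
  proof (cases "C * \<bar>Im w\<bar> powr \<alpha> < Re w")
    case True
    hence "Re w = x1" using w(2,3) wc(1) by (auto simp: planar_cusp_def)
    thus ?thesis using not_core by simp
  next
    case False
    hence "Re w * slope (Re w) \<le> \<bar>Im w\<bar>" using cusp_ineq_iff_slope(1)[OF w(3)] by simp
    moreover have "band_edge (Re w) \<le> Re w * slope (Re w)"
      using slope_pos[OF w(3)] w(3) by (simp add: mult_left_le_one_le)
    ultimately show ?thesis by linarith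
  qed
  hence "u (Complex (Re w) (Im w)) \<le> 0" using barrier_nonpos_in_band[OF w(3) adm _ le] by simp
  thus ?thesis by simp
qed


lemma perturbed_barrier_strict_submean:
  assumes "cball a s \<subseteq> {z. 0 < Re z}" "0 < s" "0 < \<epsilon>"
  shows "c * u a + \<epsilon> * (cmod a^2 - R) < (1/(2*pi)) *
    (LINT \<theta>:{0..2*pi}|lborel. c * u (a + of_real s * cis \<theta>) + \<epsilon> * (cmod (a + of_real s * cis \<theta>)^2 - R))"
proof -
  let ?g = "\<lambda>t. c * u (a + of_real s * cis t) + \<epsilon> * (cmod (a + of_real s * cis t)^2 - R)"
  have "a + of_real s * cis t \<in> cball a s" for t using assms(2) by (simp add: dist_norm norm_mult)
  hence circle: "(\<lambda>t. a + of_real s * cis t) ` {0..2*pi} \<subseteq> {z. 0 < Re z}" using assms(1) by blast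
  have "(?g has_integral (c * (2 * pi * u a) + \<epsilon> * (2 * pi * (cmod a^2 + s^2) - 2 * pi * R))) {0..2*pi}"
    using barrier_circle_mean[OF assms(1,2)] norm_sq_circle_mean[OF assms(2), of a]
      has_integral_const_real[of R 0 "2*pi"]
    by (intro has_integral_add has_integral_mult_right has_integral_diff) auto
  moreover have "continuous_on {0..2*pi} ?g"
    by (intro continuous_intros continuous_on_compose2[OF barrier_continuous _ circle])
  ultimately have "(1/(2*pi)) * (LINT \<theta>:{0..2*pi}|lborel. ?g \<theta>) = c * u a + \<epsilon> * (cmod a^2 + s^2 - R)"
    by (subst circle_mean_eq_of_has_integral) (auto simp: field_simps)
  thus ?thesis using assms(2,3) by simp
qed

lemma barrier_le_exp_pi:
  assumes "barrier_admissible \<alpha> C x1" "z \<in> D x1"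
  shows "u z \<le> exp pi"
proof -
  have "0 < Re z" using assms(2) by (simp add: planar_cusp_def)
  hence "u z \<le> exp (pi - A/2 * cmod z powr (-\<beta>))"
    using barrier_le in_planar_cusp[OF assms] by (simp add: less_imp_le)
  also have "\<dots> \<le> exp pi" using A_pos by simp
  finally show ?thesis .
qed

lemma barrier_small_near_frontier:
  assumes x1: "barrier_admissible \<alpha> C x1" and w: "w \<in> closure (D x1)" "Re w = 0 \<or> u w \<le> 0"
    and e: "0 < e"
  shows "\<exists>d>0. \<forall>z\<in>D x1. cmod (z - w) < d \<longrightarrow> u z < e"
proof -
  have wc: "0 \<le> Re w" "C * \<bar>Im w\<bar> powr \<alpha> \<le> Re w" using closure_planar_cusp w(1) by auto
  show ?thesis
  proof (cases "Re w = 0")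
    case True
    hence "\<bar>Im w\<bar> powr \<alpha> = 0" using wc(2) C_pos by (simp add: mult_le_0_iff order.antisym)
    hence "w = 0" using True by (simp add: complex_eq_iff)
    thus ?thesis using barrier_small_near_vertex[OF x1 e] by simp
  next
    case False
    hence "isCont u w"
      using barrier_continuous wc(1) open_halfspace_Re_gt[of 0] continuous_on_eq_continuous_at
      by fastforce
    then obtain d where "0 < d" "\<forall>z. dist z w < d \<longrightarrow> dist (u z) (u w) < e"
      using e unfolding continuous_at_eps_delta by blast
    moreover have "u z < e" if "dist (u z) (u w) < e" for z
      using that w(2) False by (simp add: dist_real_def abs_less_iff)
    ultimately show ?thesis by (auto simp: dist_norm)
  qed
qed

lemma comparison_boundary:
  assumes x1: "0 < x1" "barrier_admissible \<alpha> C x1"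
    and neg: "\<And>z. z \<in> D x1 \<Longrightarrow> f z < 0" and m: "0 < m" and x1': "x1' < x1"
    and core: "\<And>z. z \<in> D x1 \<Longrightarrow> x1' < Re z \<Longrightarrow> \<bar>Im z\<bar> < band_edge x1 \<Longrightarrow> f z \<le> - m"
    and w: "w \<in> closure (D x1)" "w \<notin> D x1" and e: "0 < e"
  shows "\<exists>d>0. \<forall>z\<in>D x1. cmod (z - w) < d \<longrightarrow> f z + m / exp pi * u z < e"
proof (cases "Re w = 0 \<or> u w \<le> 0")
  case True
  obtain d where d: "0 < d" "\<forall>z\<in>D x1. cmod (z - w) < d \<longrightarrow> u z < e * exp pi / m"
    using barrier_small_near_frontier[OF x1(2) w(1) True, of "e * exp pi / m"] e m by auto
  have "f z + m / exp pi * u z < e" if "z \<in> D x1" "cmod (z - w) < d" for z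
  proof -
    have "m / exp pi * u z < m / exp pi * (e * exp pi / m)"
      using d(2) that m by (intro mult_strict_left_mono) auto
    thus ?thesis using neg[OF that(1)] m by simp
  qed
  thus ?thesis using d(1) by blast
next
  case False
  hence "Re w = x1 \<and> \<bar>Im w\<bar> < band_edge x1"
    using closure_planar_cusp w(1) barrier_nonpos_on_frontier[OF x1 w] by fastforce
  hence "w \<in> {z. x1' < Re z \<and> \<bar>Im z\<bar> < band_edge x1}" using x1' by simp
  moreover have "open {z. x1' < Re z \<and> \<bar>Im z\<bar> < band_edge x1}"
    unfolding Collect_conj_eq by (intro open_Int open_Collect_less continuous_intros)
  ultimately obtain d where d: "0 < d" "ball w d \<subseteq> {z. x1' < Re z \<and> \<bar>Im z\<bar> < band_edge x1}"
    using open_contains_ball by blast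
  have "f z + m / exp pi * u z < e" if "z \<in> D x1" "cmod (z - w) < d" for z
  proof -
    have "x1' < Re z" "\<bar>Im z\<bar> < band_edge x1"
      using d(2) that(2) by (auto simp: dist_norm norm_minus_commute)
    hence "f z \<le> - m" using core that(1) by blast
    moreover have "m / exp pi * u z \<le> m" using barrier_le_exp_pi[OF x1(2) that(1)] m
      by (simp add: field_simps)
    ultimately show ?thesis using e by linarith
  qed
  thus ?thesis using d(1) by blast
qed


text \<open>The term \<epsilon> (|z|^2 - (2 x1)^2) is negative on D and makes the comparison function
  strictly subharmonic; letting \<epsilon> tend to 0 afterwards gives the comparison with the barrier.\<close>
lemma perturbed_comparison:
  assumes x1: "0 < x1" "barrier_admissible \<alpha> C x1"
    and f: "subharmonic_on (D x1) f" and neg: "\<And>z. z \<in> D x1 \<Longrightarrow> f z < 0"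
    and m: "0 < m" and x1': "x1' < x1"
    and core: "\<And>z. z \<in> D x1 \<Longrightarrow> x1' < Re z \<Longrightarrow> \<bar>Im z\<bar> < band_edge x1 \<Longrightarrow> f z \<le> - m"
    and \<epsilon>: "0 < \<epsilon>" and z0: "z0 \<in> D x1"
  shows "f z0 + (m / exp pi * u z0 + \<epsilon> * (cmod z0^2 - (2 * x1)^2)) \<le> 0"
proof (rule subharmonic_max_principle[where K = m])
  show "bounded (D x1)" using bounded_planar_cusp[OF x1(2)] .
  show "open (D x1)" by (rule open_planar_cusp)
  show "subharmonic_on (D x1) f" by (rule f)
  show "continuous_on (D x1) (\<lambda>z. m / exp pi * u z + \<epsilon> * (cmod z^2 - (2 * x1)^2))"
    using barrier_continuous planar_cusp_subset_right_half_plane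
    by (intro continuous_intros) (rule continuous_on_subset)
  show "m / exp pi * u a + \<epsilon> * (cmod a^2 - (2 * x1)^2) < (1/(2*pi)) * (LINT \<theta>:{0..2*pi}|lborel.
      m / exp pi * u (a + of_real s * cis \<theta>) + \<epsilon> * (cmod (a + of_real s * cis \<theta>)^2 - (2 * x1)^2))"
    if "0 < s" "cball a s \<subseteq> D x1" for a s
    using perturbed_barrier_strict_submean that \<epsilon> planar_cusp_subset_right_half_plane by blast
  have small: "\<epsilon> * (cmod z^2 - (2 * x1)^2) \<le> 0" if "z \<in> D x1" for z
  proof -
    have "cmod z^2 \<le> (2 * x1)^2" using in_planar_cusp(3)[OF x1(2) that] by (intro power_mono) auto
    thus ?thesis using \<epsilon> by (simp add: mult_nonneg_nonpos)
  qed
  show "f z + (m / exp pi * u z + \<epsilon> * (cmod z^2 - (2 * x1)^2)) \<le> m" if "z \<in> D x1" for z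
  proof -
    have "m / exp pi * u z \<le> m" using barrier_le_exp_pi[OF x1(2) that] m by (simp add: field_simps)
    thus ?thesis using neg[OF that] small[OF that] by linarith
  qed
  show "\<exists>d>0. \<forall>z\<in>D x1. cmod (z - w) < d \<longrightarrow> f z + (m / exp pi * u z + \<epsilon> * (cmod z^2 - (2 * x1)^2)) < e"
    if w: "w \<in> closure (D x1)" "w \<notin> D x1" "0 < e" for w e
  proof -
    obtain d where d: "0 < d" "\<forall>z\<in>D x1. cmod (z - w) < d \<longrightarrow> f z + m / exp pi * u z < e"
      using comparison_boundary[where f = f, OF x1 neg m x1' core w] by blast
    have "f z + (m / exp pi * u z + \<epsilon> * (cmod z^2 - (2 * x1)^2)) < e" if "z \<in> D x1" "cmod (z - w) < d" for z
      using d(2) that small[OF that(1)] by fastforce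
    thus ?thesis using d(1) by blast
  qed
  show "z0 \<in> D x1" by (rule z0)
qed

lemma planar_comparison:
  assumes x1: "0 < x1" "barrier_admissible \<alpha> C x1"
    and f: "subharmonic_on (D x1) f" and neg: "\<And>z. z \<in> D x1 \<Longrightarrow> f z < 0"
    and m: "0 < m" and x1': "x1' < x1"
    and core: "\<And>z. z \<in> D x1 \<Longrightarrow> x1' < Re z \<Longrightarrow> \<bar>Im z\<bar> < band_edge x1 \<Longrightarrow> f z \<le> - m"
    and t: "0 < t" "t < x1"
  shows "f (of_real t) \<le> - (m / exp pi) * exp (- A * t powr (-\<beta>))"
proof -
  have t_in: "of_real t \<in> D x1" using t alpha_pos by (simp add: planar_cusp_def)
  have R0: "0 < (2 * x1)^2" using x1(1) by simp
  have "f (of_real t) \<le> - (m / exp pi) * u (of_real t)"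
  proof (rule field_le_epsilon)
    fix e :: real assume "0 < e"
    have "- e \<le> e / (2 * x1)^2 * (cmod (of_real t :: complex)^2 - (2 * x1)^2)"
      using R0 \<open>0 < e\<close> by (simp add: field_simps)
    thus "f (of_real t) \<le> - (m / exp pi) * u (of_real t) + e"
      using perturbed_comparison[where f = f, OF x1 f neg m x1' core _ t_in, of "e / (2 * x1)^2"] R0 \<open>0 < e\<close>
      by simp
  qed
  also have "\<dots> \<le> - (m / exp pi) * exp (- A * t powr (-\<beta>))"
    using barrier_on_axis[OF t(1)] m by (simp add: field_simps)
  finally show ?thesis .
qed

end

section \<open>Complex lines through a cusp\<close>

lemma norm_vec_smult: "norm (c *s (x :: complex^'n)) = cmod c * norm x"
proof -
  have "norm (c *s x) = L2_set (\<lambda>i. cmod c * cmod (x$i)) UNIV"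
    unfolding norm_vec_def by (simp add: norm_mult)
  also have "\<dots> = cmod c * L2_set (\<lambda>i. cmod (x$i)) UNIV"
    by (rule L2_set_right_distrib[symmetric]) simp
  finally show ?thesis by (simp add: norm_vec_def)
qed

lemma scaleR_eq_smult: "t *\<^sub>R (v :: complex^'n) = complex_of_real t *s v"
  unfolding vec_eq_iff vector_scaleR_component vector_smult_component
  by (simp add: scaleR_conv_of_real)

lemma Re_cinner_eq_inner: "Re (cinner w v) = inner w (v :: complex^'n)"
  unfolding cinner_def inner_vec_def by (simp add: inner_complex_def)

lemma Re_cinner_smult_unit:
  assumes "norm (v :: complex^'n) = 1" shows "Re (cinner (c *s v) v) = Re c"
proof -
  have "cinner v v = (\<Sum>k\<in>UNIV. of_real ((cmod (v$k))^2))"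
    unfolding cinner_def by (rule sum.cong[OF refl]) (rule complex_norm_square[symmetric])
  also have "\<dots> = of_real ((norm v)^2)"
    unfolding norm_vec_def L2_set_def by (simp add: sum_nonneg)
  finally have "cinner v v = 1" using assms by simp
  moreover have "cinner (c *s v) v = c * cinner v v"
    unfolding cinner_def by (simp add: sum_distrib_left mult.assoc)
  ultimately show ?thesis by simp
qed

lemma norm_proj_hyp_smult_unit:
  assumes "norm (v :: complex^'n) = 1" shows "norm (proj_hyp v (c *s v)) = \<bar>Im c\<bar>"
proof -
  have "proj_hyp v (c *s v) = (c - of_real (Re c)) *s v"
    unfolding proj_hyp_def using assms
    by (simp add: Re_cinner_smult_unit scaleR_eq_smult vector_sub_rdistrib)
  also have "c - of_real (Re c) = \<i> * of_real (Im c)" by (simp add: complex_eq_iff)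
  finally show ?thesis using assms by (simp add: norm_vec_smult norm_mult)
qed

lemma norm_proj_hyp_le:
  assumes "norm (v :: complex^'n) = 1" shows "norm (proj_hyp v w) \<le> norm w"
proof -
  have vv: "inner v v = 1" using assms norm_eq_1 by blast
  have "(norm (proj_hyp v w))^2 = (norm w)^2 - (inner w v)^2"
    unfolding proj_hyp_def Re_cinner_eq_inner power2_norm_eq_inner
    by (simp add: inner_diff_left inner_diff_right vv inner_commute power2_eq_square algebra_simps)
  hence "(norm (proj_hyp v w))^2 \<le> (norm w)^2" by simp
  thus ?thesis using power2_le_imp_le by fastforce
qed

lemma line_in_cusp_iff:
  assumes "norm v = 1"
  shows "p + \<zeta> *s v \<in> cusp p v C \<alpha> \<longleftrightarrow> C * \<bar>Im \<zeta>\<bar> powr \<alpha> < Re \<zeta>"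
  using assms by (simp add: cusp_def Re_cinner_smult_unit norm_proj_hyp_smult_unit)

lemma ball_in_cusp:
  fixes p v :: "complex^'n" and \<zeta> :: complex
  assumes v: "norm v = 1" and sub: "cusp p v C \<alpha> \<inter> ball p r \<subseteq> \<Omega>" and C: "0 < C" and \<alpha>: "0 < \<alpha>"
    and \<tau>: "0 < \<tau>" "C * (\<bar>Im \<zeta>\<bar> + \<tau>) powr \<alpha> < Re \<zeta> - \<tau>" "cmod \<zeta> + \<tau> \<le> r"
  shows "ball (p + \<zeta> *s v) \<tau> \<subseteq> \<Omega>"
proof
  fix z assume "z \<in> ball (p + \<zeta> *s v) \<tau>"
  define w where "w = z - (p + \<zeta> *s v)"
  have w: "norm w < \<tau>" using \<open>z \<in> ball _ _\<close> by (simp add: w_def dist_norm norm_minus_commute)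
  have zp: "z - p = \<zeta> *s v + w" by (simp add: w_def)
  have "Re (cinner (z - p) v) = Re \<zeta> + inner w v"
    unfolding zp Re_cinner_eq_inner[symmetric] using Re_cinner_smult_unit[OF v]
    by (simp add: Re_cinner_eq_inner inner_add_left)
  moreover have "\<bar>inner w v\<bar> \<le> norm w" using Cauchy_Schwarz_ineq2[of w v] v by simp
  ultimately have re: "Re \<zeta> - \<tau> < Re (cinner (z - p) v)" using w by linarith
  have "proj_hyp v (z - p) = proj_hyp v (\<zeta> *s v) + proj_hyp v w"
    unfolding zp proj_hyp_def Re_cinner_eq_inner by (simp add: inner_add_left scaleR_add_left)
  hence "norm (proj_hyp v (z - p)) \<le> \<bar>Im \<zeta>\<bar> + norm w"
    using norm_triangle_ineq norm_proj_hyp_smult_unit[OF v] norm_proj_hyp_le[OF v, of w]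
    by (metis add_left_mono order_trans)
  hence "norm (proj_hyp v (z - p)) powr \<alpha> \<le> (\<bar>Im \<zeta>\<bar> + \<tau>) powr \<alpha>"
    using w \<alpha> by (intro powr_mono2) auto
  hence "C * norm (proj_hyp v (z - p)) powr \<alpha> \<le> C * (\<bar>Im \<zeta>\<bar> + \<tau>) powr \<alpha>" using C by simp
  hence "z \<in> cusp p v C \<alpha>" unfolding cusp_def using re \<tau>(2) by simp
  moreover have "norm (z - p) < r"
    using norm_triangle_ineq[of "\<zeta> *s v" w] w \<tau>(3) v by (simp add: zp norm_vec_smult)
  ultimately show "z \<in> \<Omega>" using sub by (auto simp: dist_norm norm_minus_commute)
qed

lemma ball_subset_le_infdist_frontier:
  fixes \<Omega> :: "'a::real_normed_vector set"
  assumes "open \<Omega>" "ball z \<tau> \<subseteq> \<Omega>" "frontier \<Omega> \<noteq> {}"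
  shows "\<tau> \<le> infdist z (frontier \<Omega>)"
  unfolding infdist_notempty[OF assms(3)]
proof (rule cINF_greatest[OF assms(3)])
  fix a assume "a \<in> frontier \<Omega>"
  hence "a \<notin> ball z \<tau>" using assms(1,2) by (auto simp: frontier_def interior_open)
  thus "\<tau> \<le> dist z a" by simp
qed

lemma usc_onD:
  assumes "usc_on \<Omega> \<rho>" "w \<in> \<Omega>" "0 < e"
  shows "\<exists>d>0. \<forall>z\<in>\<Omega>. dist z w < d \<longrightarrow> \<rho> z < \<rho> w + e"
proof -
  have "openin (top_of_set \<Omega>) {z\<in>\<Omega>. \<rho> z < \<rho> w + e}" using assms(1) unfolding usc_on_def by blast
  moreover have "w \<in> {z\<in>\<Omega>. \<rho> z < \<rho> w + e}" using assms(2,3) by simp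
  ultimately show ?thesis unfolding openin_euclidean_subtopology_iff by blast
qed

lemma psh_restrict_line_subharmonic:
  fixes \<rho> :: "complex^'n \<Rightarrow> real"
  assumes psh: "psh \<Omega> \<rho>" and v: "norm v = 1" and S: "\<And>\<zeta>. \<zeta> \<in> S \<Longrightarrow> p + \<zeta> *s v \<in> \<Omega>"
  shows "subharmonic_on S (\<lambda>\<zeta>. \<rho> (p + \<zeta> *s v))"
  unfolding subharmonic_on_def
proof (rule conjI; intro ballI allI impI)
  fix w and e :: real assume "w \<in> S" "0 < e"
  then obtain d where d: "0 < d" "\<forall>z\<in>\<Omega>. dist z (p + w *s v) < d \<longrightarrow> \<rho> z < \<rho> (p + w *s v) + e"
    using usc_onD[of \<Omega> \<rho>] psh S unfolding psh_def by blast
  have "dist (p + z *s v) (p + w *s v) = cmod (z - w)" for z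
  proof -
    have "dist (p + z *s v) (p + w *s v) = norm ((z - w) *s v)"
      unfolding dist_norm by (rule arg_cong[where f = norm]) (simp add: vec_eq_iff algebra_simps)
    thus ?thesis using v by (simp only: norm_vec_smult mult_1_right)
  qed
  thus "\<exists>d>0. \<forall>z\<in>S. cmod (z - w) < d \<longrightarrow> \<rho> (p + z *s v) < \<rho> (p + w *s v) + e"
    using d S by auto
next
  fix a :: complex and s :: real assume s: "0 < s" "cball a s \<subseteq> S"
  define b where "b = (of_real s :: complex) *s v"
  have line: "p + a *s v + \<xi> *s b = p + (a + of_real s * \<xi>) *s v" for \<xi>
    by (simp add: b_def vec_eq_iff algebra_simps)
  have "p + a *s v + \<xi> *s b \<in> \<Omega>" if "norm \<xi> \<le> 1" for \<xi> :: complex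
  proof -
    have "cmod (of_real s * \<xi>) \<le> s" using that s(1) by (simp add: norm_mult mult_left_le)
    hence "a + of_real s * \<xi> \<in> S" using s(2) by (auto simp: dist_norm)
    thus ?thesis unfolding line by (rule S)
  qed
  moreover have "a \<in> S" using s by (auto intro: subsetD[OF s(2)])
  hence "p + a *s v \<in> \<Omega>" by (rule S)
  ultimately have "set_integrable lborel {0..2*pi} (\<lambda>\<theta>. \<rho> (p + a *s v + cis \<theta> *s b)) \<and>
      \<rho> (p + a *s v) \<le> (1/(2*pi)) * (LINT \<theta>:{0..2*pi}|lborel. \<rho> (p + a *s v + cis \<theta> *s b))"
    using psh unfolding psh_def by blast
  thus "set_integrable lborel {0..2*pi} (\<lambda>\<theta>. \<rho> (p + (a + of_real s * cis \<theta>) *s v)) \<and>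
      \<rho> (p + a *s v) \<le> (1/(2*pi)) * (LINT \<theta>:{0..2*pi}|lborel. \<rho> (p + (a + of_real s * cis \<theta>) *s v))"
    by (simp only: line)
qed

lemma usc_neg_le_neg_on_compact:
  fixes \<rho> :: "complex^'n \<Rightarrow> real"
  assumes K: "compact K" "K \<subseteq> \<Omega>" and usc: "usc_on \<Omega> \<rho>" and neg: "\<forall>z\<in>\<Omega>. \<rho> z < 0"
  shows "\<exists>m>0. \<forall>z\<in>K. \<rho> z \<le> - m"
proof (cases "K = {}")
  case True
  thus ?thesis by (intro exI[of _ 1]) auto
next
  case False
  have "\<rho> z \<le> 0" if "z \<in> K" for z using neg K(2) that by (meson less_imp_le subsetD)
  hence bdd: "bdd_above (\<rho> ` K)" by (rule bdd_aboveI2)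
  obtain w where w: "w \<in> closure K" and near: "\<forall>d>0. \<forall>e>0. \<exists>z\<in>K. dist z w < d \<and> Sup (\<rho> ` K) - e < \<rho> z"
    using near_maximizers_accumulate[OF compact_imp_bounded[OF K(1)] False bdd] by blast
  have wK: "w \<in> K" using w closure_closed[OF compact_imp_closed[OF K(1)]] by simp
  have w\<Omega>: "w \<in> \<Omega>" using wK K(2) by blast
  have "\<exists>d>0. \<forall>z\<in>K. dist z w < d \<longrightarrow> \<rho> z < \<rho> w + e" if "0 < e" for e
    using usc_onD[OF usc w\<Omega> that] K(2) by blast
  hence "Sup (\<rho> ` K) \<le> \<rho> w" by (rule Sup_le_at_usc_accumulation_point[OF near])
  moreover have "\<rho> w < 0" using neg w\<Omega> by blast
  ultimately have "0 < - Sup (\<rho> ` K)" by linarith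
  moreover have "\<rho> z \<le> Sup (\<rho> ` K)" if "z \<in> K" for z using that bdd by (intro cSup_upper) auto
  ultimately show ?thesis by (intro exI[of _ "- Sup (\<rho> ` K)"]) auto
qed

lemma compact_infdist_frontier_ge:
  fixes \<Omega> :: "'a::heine_borel set"
  assumes "bounded \<Omega>" "open \<Omega>" "0 < \<tau>"
  shows "compact {z\<in>\<Omega>. \<tau> \<le> infdist z (frontier \<Omega>)}"
proof -
  have eq: "{z\<in>\<Omega>. \<tau> \<le> infdist z (frontier \<Omega>)} = closure \<Omega> \<inter> {z. \<tau> \<le> infdist z (frontier \<Omega>)}"
  proof
    show "{z\<in>\<Omega>. \<tau> \<le> infdist z (frontier \<Omega>)} \<subseteq> closure \<Omega> \<inter> {z. \<tau> \<le> infdist z (frontier \<Omega>)}"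
      using closure_subset by blast
    show "closure \<Omega> \<inter> {z. \<tau> \<le> infdist z (frontier \<Omega>)} \<subseteq> {z\<in>\<Omega>. \<tau> \<le> infdist z (frontier \<Omega>)}"
    proof clarify
      fix z assume z: "z \<in> closure \<Omega>" "\<tau> \<le> infdist z (frontier \<Omega>)"
      hence "z \<notin> frontier \<Omega>" using assms(3) by auto
      thus "z \<in> \<Omega>" using z(1) assms(2) by (simp add: frontier_def interior_open)
    qed
  qed
  have "closed {z. \<tau> \<le> infdist z (frontier \<Omega>)}" by (intro closed_Collect_le continuous_intros)
  hence "closed (closure \<Omega> \<inter> {z. \<tau> \<le> infdist z (frontier \<Omega>)})" by blast
  moreover have "bounded (closure \<Omega> \<inter> {z. \<tau> \<le> infdist z (frontier \<Omega>)})"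
    using assms(1) bounded_closure bounded_Int by blast
  ultimately show ?thesis unfolding eq by (simp add: compact_eq_bounded_closed)
qed

lemma axis_parameter_small:
  fixes \<Omega> :: "(complex^'n) set"
  assumes \<Omega>: "open \<Omega>" "frontier \<Omega> \<noteq> {}" and v: "norm v = 1" and cusp: "cusp p v C \<alpha> \<inter> ball p r \<subseteq> \<Omega>"
    and C: "0 < C" and \<alpha>: "0 < \<alpha>" and \<tau>: "0 < \<tau>" "2 * \<tau> < r" "C * \<tau> powr \<alpha> + \<tau> < x1"
    and t: "t < r/2" "infdist (p + t *\<^sub>R v) (frontier \<Omega>) < \<tau>"
  shows "t < x1"
proof (rule ccontr)
  assume "\<not> t < x1"
  moreover have "0 \<le> C * \<tau> powr \<alpha>" using C by simp
  ultimately have "0 < t" using \<tau>(1,3) by linarith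
  have "ball (p + of_real t *s v) \<tau> \<subseteq> \<Omega>"
    by (rule ball_in_cusp[OF v cusp C \<alpha> \<tau>(1)]) (use \<tau> t \<open>\<not> t < x1\<close> \<open>0 < t\<close> in auto)
  moreover have "p + t *\<^sub>R v = p + of_real t *s v" by (simp add: scaleR_eq_smult)
  ultimately have "\<tau> \<le> infdist (p + t *\<^sub>R v) (frontier \<Omega>)"
    using ball_subset_le_infdist_frontier[OF \<Omega>(1) _ \<Omega>(2)] by simp
  thus False using t(2) by simp
qed

lemma exp_neg_div_powr_mono:
  fixes \<delta> t A \<beta> :: real
  assumes "0 < \<delta>" "\<delta> \<le> t" "0 \<le> A" "0 < \<beta>"
  shows "exp (- A / \<delta> powr \<beta>) \<le> exp (- A * t powr (- \<beta>))"
proof -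
  have "\<delta> powr \<beta> \<le> t powr \<beta>" using assms by (intro powr_mono2) auto
  hence "A / t powr \<beta> \<le> A / \<delta> powr \<beta>" using assms by (intro divide_left_mono) auto
  thus ?thesis by (simp add: powr_minus divide_inverse)
qed

context cusp_barrier
begin

lemma eventually_admissible: "eventually (barrier_admissible \<alpha> C) (at_right 0)"
proof -
  define s where "s = min (1/2) (min (1/\<beta>) (2 / (1 + \<beta>)))"
  have s0: "0 < s" using exponent_pos by (simp add: s_def)
  have nonneg: "eventually (\<lambda>x::real. 0 \<le> x) (at_right 0)" "eventually (\<lambda>x::real. 0 \<le> 2 * x) (at_right 0)"
    using eventually_at_right_less[of "0::real"] by (auto elim: eventually_mono)
  have "((\<lambda>x::real. x powr \<beta> / C powr (1/\<alpha>)) \<longlongrightarrow> 0 powr \<beta> / C powr (1/\<alpha>)) (at_right 0)"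
    using exponent_pos nonneg C_pos by (intro tendsto_intros) auto
  hence e1: "eventually (\<lambda>x. x powr \<beta> / C powr (1/\<alpha>) < s) (at_right 0)"
    using s0 exponent_pos by (intro order_tendstoD(2)) auto
  have "((\<lambda>x::real. B * (2 * x) powr \<beta>) \<longlongrightarrow> B * (2 * 0) powr \<beta>) (at_right 0)"
    using exponent_pos nonneg by (intro tendsto_intros) auto
  hence e2: "eventually (\<lambda>x. B * (2 * x) powr \<beta> < pi) (at_right 0)"
    using exponent_pos by (intro order_tendstoD(2)) auto
  have "eventually (\<lambda>x::real. 0 < x) (at_right 0)" by (rule eventually_at_right_less)
  with e1 e2 have "eventually (\<lambda>x. 0 < x \<and> slope x < s \<and> B * (2 * x) powr \<beta> < pi) (at_right 0)"
    by eventually_elim (simp add: slope_eq)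
  thus ?thesis
  proof (rule eventually_mono)
    fix x assume x: "0 < x \<and> slope x < s \<and> B * (2 * x) powr \<beta> < pi"
    have \<sigma>: "0 < slope x" "slope x \<le> 1/2" "slope x \<le> 1/\<beta>" "slope x \<le> 2 / (1 + \<beta>)"
      using x slope_pos[of x] by (auto simp: s_def)
    have "\<beta> * slope x \<le> 1" using \<sigma>(3) exponent_pos by (simp add: field_simps)
    moreover have "(slope x)^2 * (1 + \<beta>) / 2 \<le> slope x * (1 + \<beta>) / 2"
      using \<sigma>(1,2) exponent_pos
      by (intro divide_right_mono mult_right_mono) (auto simp: power2_eq_square)
    moreover have "slope x * (1 + \<beta>) / 2 \<le> 1" using \<sigma>(4) exponent_pos by (simp add: field_simps)
    ultimately show "barrier_admissible \<alpha> C x" using x \<sigma>(2) unfolding barrier_admissible_def by auto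
  qed
qed

lemma exists_barrier_scale:
  assumes "0 < r"
  obtains x1 \<tau> where "0 < x1" "barrier_admissible \<alpha> C x1" "4 * x1 < r" "0 < \<tau>" "2 * \<tau> < r"
    "C * (band_edge x1 + \<tau>) powr \<alpha> + \<tau> < x1" "C * \<tau> powr \<alpha> + \<tau> < x1"
proof -
  have "eventually (\<lambda>x. x \<in> {0<..<r/4}) (at_right 0)" using assms
    by (intro eventually_at_right_real) simp
  hence "eventually (\<lambda>x. 0 < x \<and> barrier_admissible \<alpha> C x \<and> x < r/4) (at_right 0)"
    using eventually_admissible by eventually_elim auto
  then obtain x1 where x1: "0 < x1" "barrier_admissible \<alpha> C x1" "x1 < r/4"
    using eventually_happens'[OF trivial_limit_at_right_real] by blast
  define Y where "Y = band_edge x1"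
  have \<sigma>: "0 < slope x1" "slope x1 \<le> 1/2" using slope_pos x1 by (auto simp: barrier_admissible_def)
  hence "0 \<le> Y" "Y < x1 * slope x1"
    using x1(1) power_mono[OF \<sigma>(2), of 2]
    by (auto simp: Y_def power2_eq_square mult_less_cancel_right1)
  hence CY: "C * Y powr \<alpha> < x1" using cusp_ineq_iff_slope(1)[OF x1(1)] by simp
  have "((\<lambda>\<tau>. C * (Y + \<tau>) powr \<alpha> + \<tau>) \<longlongrightarrow> C * (Y + 0) powr \<alpha> + 0) (at_right 0)"
    using alpha_pos \<open>0 \<le> Y\<close> eventually_at_right_less[of "0::real"]
    by (intro tendsto_intros) (auto elim: eventually_mono)
  hence "eventually (\<lambda>\<tau>. C * (Y + \<tau>) powr \<alpha> + \<tau> < x1) (at_right 0)"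
    using CY by (intro order_tendstoD(2)) auto
  moreover have "eventually (\<lambda>x. x \<in> {0<..<r/2}) (at_right 0)" using assms
    by (intro eventually_at_right_real) simp
  ultimately have "eventually (\<lambda>\<tau>. 0 < \<tau> \<and> \<tau> < r/2 \<and> C * (Y + \<tau>) powr \<alpha> + \<tau> < x1) (at_right 0)"
    by eventually_elim auto
  then obtain \<tau> where \<tau>: "0 < \<tau>" "\<tau> < r/2" "C * (Y + \<tau>) powr \<alpha> + \<tau> < x1"
    using eventually_happens'[OF trivial_limit_at_right_real] by blast
  have "\<tau> powr \<alpha> \<le> (Y + \<tau>) powr \<alpha>" using \<open>0 \<le> Y\<close> \<tau>(1)
    by (intro powr_mono2) (auto simp: alpha_pos less_imp_le)
  hence "C * \<tau> powr \<alpha> \<le> C * (Y + \<tau>) powr \<alpha>" using C_pos by simp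
  hence "C * \<tau> powr \<alpha> + \<tau> < x1" using \<tau>(3) by linarith
  thus ?thesis using that x1 \<tau> by (simp add: Y_def)
qed

lemma psh_bound_on_axis:
  fixes \<Omega> :: "(complex^'n) set" and \<rho> :: "complex^'n \<Rightarrow> real"
  assumes \<Omega>: "open \<Omega>" "frontier \<Omega> \<noteq> {}" and \<rho>: "psh \<Omega> \<rho>" "\<forall>z\<in>\<Omega>. \<rho> z < 0"
    and v: "norm v = 1" and cusp: "cusp p v C \<alpha> \<inter> ball p r \<subseteq> \<Omega>"
    and x1: "0 < x1" "barrier_admissible \<alpha> C x1" "4 * x1 < r"
    and \<tau>: "0 < \<tau>" "2 * \<tau> < r" "C * (band_edge x1 + \<tau>) powr \<alpha> + \<tau> < x1"
    and m: "0 < m" "\<forall>z\<in>\<Omega>. \<tau> \<le> infdist z (frontier \<Omega>) \<longrightarrow> \<rho> z \<le> - m"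
    and t: "0 < t" "t < x1"
  shows "\<rho> (p + t *\<^sub>R v) \<le> - (m / exp pi) * exp (- A * t powr (-\<beta>))"
proof -
  define f where "f \<zeta> = \<rho> (p + \<zeta> *s v)" for \<zeta>
  have in_\<Omega>: "p + \<zeta> *s v \<in> \<Omega>" if "\<zeta> \<in> D x1" for \<zeta>
  proof -
    have "p + \<zeta> *s v \<in> cusp p v C \<alpha>" using that line_in_cusp_iff[OF v]
      by (simp add: planar_cusp_def)
    moreover have "cmod \<zeta> < r" using in_planar_cusp(3)[OF x1(2) that] x1(3) x1(1) by simp
    hence "p + \<zeta> *s v \<in> ball p r" using v by (simp add: dist_norm norm_vec_smult)
    ultimately show ?thesis using cusp by blast
  qed
  have core: "f \<zeta> \<le> - m"
    if "\<zeta> \<in> D x1" "C * (band_edge x1 + \<tau>) powr \<alpha> + \<tau> < Re \<zeta>" "\<bar>Im \<zeta>\<bar> < band_edge x1" for \<zeta>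
  proof -
    have "(\<bar>Im \<zeta>\<bar> + \<tau>) powr \<alpha> \<le> (band_edge x1 + \<tau>) powr \<alpha>"
      using that(3) \<tau>(1) alpha_pos by (intro powr_mono2) auto
    hence "C * (\<bar>Im \<zeta>\<bar> + \<tau>) powr \<alpha> \<le> C * (band_edge x1 + \<tau>) powr \<alpha>" using C_pos by simp
    hence "C * (\<bar>Im \<zeta>\<bar> + \<tau>) powr \<alpha> < Re \<zeta> - \<tau>" using that(2) by linarith
    moreover have "cmod \<zeta> + \<tau> \<le> r" using in_planar_cusp(3)[OF x1(2) that(1)] x1(3) \<tau>(2) by simp
    ultimately have "ball (p + \<zeta> *s v) \<tau> \<subseteq> \<Omega>" by (rule ball_in_cusp[OF v cusp C_pos alpha_pos \<tau>(1)])
    hence "\<tau> \<le> infdist (p + \<zeta> *s v) (frontier \<Omega>)"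
      by (rule ball_subset_le_infdist_frontier[OF \<Omega>(1) _ \<Omega>(2)])
    thus ?thesis using m(2) in_\<Omega>[OF that(1)] by (simp add: f_def)
  qed
  have "subharmonic_on (D x1) f" unfolding f_def
    using psh_restrict_line_subharmonic[OF \<rho>(1) v in_\<Omega>] .
  moreover have "f \<zeta> < 0" if "\<zeta> \<in> D x1" for \<zeta> using \<rho>(2) in_\<Omega>[OF that] by (simp add: f_def)
  ultimately have "f (of_real t) \<le> - (m / exp pi) * exp (- A * t powr (-\<beta>))"
    using planar_comparison[where f = f, OF x1(1,2) _ _ m(1) \<tau>(3) core t] by blast
  moreover have "p + t *\<^sub>R v = p + of_real t *s v" by (simp add: scaleR_eq_smult)
  ultimately show ?thesis by (simp add: f_def)
qed


lemma psh_bound_by_boundary_distance: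
  fixes \<Omega> :: "(complex^'n) set" and \<rho> :: "complex^'n \<Rightarrow> real"
  assumes \<Omega>: "open \<Omega>" "frontier \<Omega> \<noteq> {}" and \<rho>: "psh \<Omega> \<rho>" "\<forall>z\<in>\<Omega>. \<rho> z < 0"
    and scale: "0 < x1" "barrier_admissible \<alpha> C x1" "4 * x1 < r" "0 < \<tau>" "2 * \<tau> < r"
      "C * (band_edge x1 + \<tau>) powr \<alpha> + \<tau> < x1" "C * \<tau> powr \<alpha> + \<tau> < x1"
    and m: "0 < m" "\<forall>z\<in>\<Omega>. \<tau> \<le> infdist z (frontier \<Omega>) \<longrightarrow> \<rho> z \<le> - m"
    and pv: "p \<in> frontier \<Omega>" "norm v = 1" "0 < t" "cusp p v C \<alpha> \<inter> ball p r \<subseteq> \<Omega>" "t < r / 2"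
    and z: "p + t *\<^sub>R v \<in> \<Omega>" "infdist (p + t *\<^sub>R v) (frontier \<Omega>) < \<tau>"
  shows "\<rho> (p + t *\<^sub>R v) \<le> - (m / exp pi) * exp (- A / infdist (p + t *\<^sub>R v) (frontier \<Omega>) powr \<beta>)"
proof -
  define \<delta> where "\<delta> = infdist (p + t *\<^sub>R v) (frontier \<Omega>)"
  have "t < x1"
    using axis_parameter_small[OF \<Omega> pv(2,4) C_pos alpha_pos scale(4,5,7) pv(5) z(2)] .
  hence bound: "\<rho> (p + t *\<^sub>R v) \<le> - (m / exp pi) * exp (- A * t powr (-\<beta>))"
    using psh_bound_on_axis[OF \<Omega> \<rho> pv(2,4) scale(1-6) m pv(3)] by blast
  have "p + t *\<^sub>R v \<notin> frontier \<Omega>" using z(1) \<Omega>(1) by (simp add: frontier_def interior_open)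
  hence "0 < \<delta>" unfolding \<delta>_def by (rule infdist_pos_not_in_closed[OF frontier_closed \<Omega>(2)])
  moreover have "\<delta> \<le> t" using infdist_le[OF pv(1), of "p + t *\<^sub>R v"] pv(2,3)
    by (simp add: \<delta>_def dist_norm)
  ultimately have "exp (- A / \<delta> powr \<beta>) \<le> exp (- A * t powr (-\<beta>))"
    using A_pos exponent_pos by (intro exp_neg_div_powr_mono) auto
  hence "- (m / exp pi) * exp (- A * t powr (-\<beta>)) \<le> - (m / exp pi) * exp (- A / \<delta> powr \<beta>)"
    by (rule mult_left_mono_neg) (use m(1) in simp)
  with bound show ?thesis unfolding \<delta>_def by linarith
qed

end

theorem theorem1p1:
  fixes \<Omega> :: "(complex^'n) set" and C \<alpha> r :: real and \<rho> :: "complex^'n \<Rightarrow> real"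
  assumes "bounded \<Omega>" and "open \<Omega>" and "connected \<Omega>" and "\<Omega> \<noteq> {}"
    and "C > 0" and "0 < \<alpha>" and "\<alpha> < 1" and "r > 0"
    and "cusp_condition \<Omega> C \<alpha> r"
    and "psh \<Omega> \<rho>" and "\<forall>z\<in>\<Omega>. \<rho> z < 0"
  shows "\<exists>c>0. \<exists>\<delta>0>0. \<forall>z\<in>\<Omega>. infdist z (frontier \<Omega>) < \<delta>0 \<longrightarrow>
           \<rho> z \<le> - c * exp (- (pi * C powr (1/\<alpha>) / (2 * (1/\<alpha> - 1)))
                              / infdist z (frontier \<Omega>) powr (1/\<alpha> - 1))"
proof -
  interpret cusp_barrier \<alpha> C using assms(5-7) by unfold_locales
  obtain \<epsilon> where \<epsilon>: "0 < \<epsilon>" and cusps: "\<forall>z\<in>\<Omega>. infdist z (frontier \<Omega>) < \<epsilon> \<longrightarrow>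
      (\<exists>p v. p \<in> frontier \<Omega> \<and> norm v = 1 \<and> (\<exists>t>0. z = p + t *\<^sub>R v) \<and>
             cusp p v C \<alpha> \<inter> ball p r \<subseteq> \<Omega> \<and> norm (z - p) < r / 2)"
    using assms(9) unfolding cusp_condition_def by blast
  have frontier_ne: "frontier \<Omega> \<noteq> {}" using assms(1,4) frontier_not_empty not_bounded_UNIV by blast
  obtain x1 \<tau> where scale: "0 < x1" "barrier_admissible \<alpha> C x1" "4 * x1 < r" "0 < \<tau>" "2 * \<tau> < r"
    "C * (band_edge x1 + \<tau>) powr \<alpha> + \<tau> < x1" "C * \<tau> powr \<alpha> + \<tau> < x1"
    using exists_barrier_scale[OF assms(8)] by blast
  obtain m where m: "0 < m" "\<forall>z\<in>\<Omega>. \<tau> \<le> infdist z (frontier \<Omega>) \<longrightarrow> \<rho> z \<le> - m"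
    using usc_neg_le_neg_on_compact[OF compact_infdist_frontier_ge[OF assms(1,2) scale(4)] _ _ assms(11)]
      assms(10) unfolding psh_def by blast
  have bound: "\<rho> z \<le> - (m / exp pi) * exp (- (pi * C powr (1/\<alpha>) / (2 * (1/\<alpha> - 1)))
                              / infdist z (frontier \<Omega>) powr (1/\<alpha> - 1))"
    if z: "z \<in> \<Omega>" "infdist z (frontier \<Omega>) < min \<epsilon> \<tau>" for z
  proof -
    obtain p v t where pv: "p \<in> frontier \<Omega>" "norm v = 1" "0 < t" "cusp p v C \<alpha> \<inter> ball p r \<subseteq> \<Omega>"
      "t < r / 2" and z_eq: "z = p + t *\<^sub>R v"
      using cusps z by auto
    from psh_bound_by_boundary_distance[OF assms(2) frontier_ne assms(10,11) scale m pv] z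
    show ?thesis unfolding z_eq by (simp add: barrier_A_def cusp_exponent_def)
  qed
  show ?thesis
    using bound m(1) \<epsilon> scale(4) by (intro exI[of _ "m / exp pi"] conjI exI[of _ "min \<epsilon> \<tau>"]) auto
qed

end
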